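(* Let $G$ be a finite transitive permutation group whose point stabilizers have order $2$. Then $G$ has the EKR property if and only if $$\sum_{\chi}\frac{\chi(g)^3}{\chi(1)}=0,$$ where $\chi$ runs through the set of all complex irreducible characters of $G$ and $g$ is any non-identity element of $G$ fixing a point.
   Context: For a permutation group $G$ on a finite set $V$, a subset $\mathcal{F}\subseteq G$ is intersecting if for all $g,h\in\mathcal{F}$ there is $v\in V$ with $g(v)=h(v)$. $G$ has the Erdős–Ko–Rado (EKR) property if the maximum size of an intersecting set of $G$ equals the maximum order of a point stabilizer $G_v$, $v\in V$. *)

theory Defs
  imports "HOL-Algebra.Bij" "Jordan_Normal_Form.Matrix"
begin

text \<open>A permutation group on a finite set V is a subgroup G of BijGroup V
  (bijections of V, extensional outside V, composition as product).\<close>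

definition perm_group :: "'a set \<Rightarrow> ('a \<Rightarrow> 'a) set \<Rightarrow> bool" where
  "perm_group V G \<longleftrightarrow> finite V \<and> subgroup G (BijGroup V)"

definition stabilizer :: "'a set \<Rightarrow> ('a \<Rightarrow> 'a) set \<Rightarrow> 'a \<Rightarrow> ('a \<Rightarrow> 'a) set" where
  "stabilizer V G v = {g \<in> G. g v = v}"

definition transitive_on :: "'a set \<Rightarrow> ('a \<Rightarrow> 'a) set \<Rightarrow> bool" where
  "transitive_on V G \<longleftrightarrow> (\<forall>u\<in>V. \<forall>w\<in>V. \<exists>g\<in>G. g u = w)"

definition intersecting :: "'a set \<Rightarrow> ('a \<Rightarrow> 'a) set \<Rightarrow> bool" where
  "intersecting V F \<longleftrightarrow> (\<forall>g\<in>F. \<forall>h\<in>F. \<exists>v\<in>V. g v = h v)"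

definition EKR :: "'a set \<Rightarrow> ('a \<Rightarrow> 'a) set \<Rightarrow> bool" where
  "EKR V G \<longleftrightarrow>
     Max {card F | F. F \<subseteq> G \<and> intersecting V F} = Max ((\<lambda>v. card (stabilizer V G v)) ` V)"

definition representation :: "('g, 'b) monoid_scheme \<Rightarrow> nat \<Rightarrow> ('g \<Rightarrow> complex mat) \<Rightarrow> bool" where
  "representation H n \<rho> \<longleftrightarrow>
     (\<forall>g\<in>carrier H. \<rho> g \<in> carrier_mat n n) \<and>
     \<rho> \<one>\<^bsub>H\<^esub> = 1\<^sub>m n \<and>
     (\<forall>g\<in>carrier H. \<forall>h\<in>carrier H. \<rho> (g \<otimes>\<^bsub>H\<^esub> h) = \<rho> g * \<rho> h)"

definition subspace_vec :: "nat \<Rightarrow> complex vec set \<Rightarrow> bool" where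
  "subspace_vec n W \<longleftrightarrow> W \<subseteq> carrier_vec n \<and> 0\<^sub>v n \<in> W \<and>
     (\<forall>x\<in>W. \<forall>y\<in>W. x + y \<in> W) \<and> (\<forall>c. \<forall>x\<in>W. c \<cdot>\<^sub>v x \<in> W)"

definition irreducible_rep :: "('g, 'b) monoid_scheme \<Rightarrow> nat \<Rightarrow> ('g \<Rightarrow> complex mat) \<Rightarrow> bool" where
  "irreducible_rep H n \<rho> \<longleftrightarrow> representation H n \<rho> \<and> n > 0 \<and>
     \<not> (\<exists>W. subspace_vec n W \<and> W \<noteq> {0\<^sub>v n} \<and> W \<noteq> carrier_vec n \<and>
            (\<forall>g\<in>carrier H. \<forall>w\<in>W. \<rho> g *\<^sub>v w \<in> W))"

definition mat_trace :: "complex mat \<Rightarrow> complex" where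
  "mat_trace A = (\<Sum>i<dim_row A. A $$ (i, i))"

definition irr_chars :: "('g, 'b) monoid_scheme \<Rightarrow> ('g \<Rightarrow> complex) set" where
  "irr_chars H = {\<chi>. \<exists>n \<rho>. irreducible_rep H n \<rho> \<and> \<chi> = (\<lambda>g\<in>carrier H. mat_trace (\<rho> g))}"

end

theory Submission
  imports Defs "Jordan_Normal_Form.Schur_Decomposition" "Jordan_Normal_Form.Spectral_Radius"
begin

text \<open>Let \<open>I\<close> be the set of non-identity elements of \<open>G\<close> fixing a point. As every stabiliser is
  \<open>{1, a}\<close> and \<open>G\<close> is transitive, \<open>I\<close> is a single conjugacy class; it contains \<open>g\<close> and is closed
  under inversion. Two permutations \<open>x \<noteq> y\<close> agree somewhere iff \<open>x\<inverse>y \<in> I\<close>, so an intersecting set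
  of size three exists iff \<open>g\<close> is a product of two elements of \<open>I\<close>; otherwise the stabilisers, of
  size two, are maximum intersecting sets. Frobenius' formula counts these factorisations as
  \<open>|I|\<^sup>2/|G| \<Sum>\<^sub>\<chi> \<chi>(g)\<^sup>3/\<chi>(1)\<close>. It is derived from scratch: Schur's lemma gives the orthogonality
  relations, the regular representation gives completeness of the irreducible characters among
  class functions, and the class sum of \<open>I\<close> acts on each irreducible representation as a scalar.\<close>

section \<open>Matrices\<close>

lemma mat_mult_index_sum:
  "A \<in> carrier_mat n m \<Longrightarrow> B \<in> carrier_mat m k \<Longrightarrow> i < n \<Longrightarrow> j < k \<Longrightarrow>
    (A * B) $$ (i,j) = (\<Sum>l<m. A $$ (i,l) * B $$ (l,j))"
  by (auto simp: scalar_prod_def atLeast0LessThan intro!: sum.cong)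

lemma mat_mult_vec_zero [simp]: "(A :: 'a :: semiring_0 mat) \<in> carrier_mat n m \<Longrightarrow> A *\<^sub>v 0\<^sub>v m = 0\<^sub>v n"
  by (intro eq_vecI) (auto simp: scalar_prod_def)

lemma zero_mat_mult_vec [simp]: "x \<in> carrier_vec m \<Longrightarrow> (0\<^sub>m n m :: 'a :: semiring_0 mat) *\<^sub>v x = 0\<^sub>v n"
  by (intro eq_vecI) (auto simp: scalar_prod_def)

lemma smult_one_mat_mult_vec: "(x :: complex vec) \<in> carrier_vec n \<Longrightarrow> (c \<cdot>\<^sub>m 1\<^sub>m n) *\<^sub>v x = c \<cdot>\<^sub>v x"
proof (intro eq_vecI)
  fix i assume "x \<in> carrier_vec n" "i < dim_vec (c \<cdot>\<^sub>v x)"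
  then show "((c \<cdot>\<^sub>m 1\<^sub>m n) *\<^sub>v x) $ i = (c \<cdot>\<^sub>v x) $ i"
    using scalar_prod_left_unit[of x n i] by (auto simp: smult_scalar_prod_distrib[of _ n x n])
qed auto

lemma smult_vec_eq_zero_imp:
  assumes "c \<cdot>\<^sub>v v = 0\<^sub>v n" "v \<in> carrier_vec n" "v \<noteq> 0\<^sub>v n"
  shows "c = (0 :: 'a :: field)"
proof -
  obtain i where "i < n" "v $ i \<noteq> 0" using assms(2,3) by (metis eq_vecI carrier_vecD index_zero_vec)
  moreover have "c * v $ i = 0" using arg_cong[OF assms(1), of "\<lambda>w. w $ i"] \<open>i < n\<close> assms(2) by simp
  ultimately show ?thesis by simp
qed

lemma mat_eqI_mult_unit_vec:
  fixes A B :: "complex mat"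
  assumes "A \<in> carrier_mat n m" "B \<in> carrier_mat n m"
    and "\<And>j. j < m \<Longrightarrow> A *\<^sub>v unit_vec m j = B *\<^sub>v unit_vec m j"
  shows "A = B"
proof (rule eq_matI)
  fix i j assume "i < dim_row B" "j < dim_col B"
  with assms have "(A *\<^sub>v unit_vec m j) $ i = (B *\<^sub>v unit_vec m j) $ i" by simp
  with \<open>i < dim_row B\<close> \<open>j < dim_col B\<close> assms(1,2) show "A $$ (i,j) = B $$ (i,j)"
    by (simp add: scalar_prod_right_unit)
qed (use assms in auto)

lemma mat_eqI_mult_vec:
  "(A :: complex mat) \<in> carrier_mat n m \<Longrightarrow> B \<in> carrier_mat n m \<Longrightarrow> (\<And>x. x \<in> carrier_vec m \<Longrightarrow> A *\<^sub>v x = B *\<^sub>v x) \<Longrightarrow> A = B"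
  using mat_eqI_mult_unit_vec[of A n m B] by auto

lemma mat_trace_eq_sum: "A \<in> carrier_mat n n \<Longrightarrow> mat_trace A = (\<Sum>i<n. A $$ (i,i))"
  unfolding mat_trace_def by auto

lemma mat_trace_mult_comm:
  assumes A: "A \<in> carrier_mat n m" and B: "B \<in> carrier_mat m n"
  shows "mat_trace (A * B) = mat_trace (B * A)"
proof -
  have "mat_trace (A * B) = (\<Sum>i<n. \<Sum>j<m. A $$ (i,j) * B $$ (j,i))"
    using A B unfolding mat_trace_def by (auto simp: scalar_prod_def atLeast0LessThan intro!: sum.cong)
  also have "\<dots> = (\<Sum>j<m. \<Sum>i<n. B $$ (j,i) * A $$ (i,j))"
    by (subst sum.swap) (simp add: mult.commute)
  also have "\<dots> = mat_trace (B * A)"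
    using A B unfolding mat_trace_def by (auto simp: scalar_prod_def atLeast0LessThan intro!: sum.cong)
  finally show ?thesis .
qed

lemma mat_trace_one [simp]: "mat_trace (1\<^sub>m n) = of_nat n"
  unfolding mat_trace_def by simp

lemma mat_trace_smult: "A \<in> carrier_mat n n \<Longrightarrow> mat_trace (c \<cdot>\<^sub>m A) = c * mat_trace A"
  unfolding mat_trace_def by (auto simp: sum_distrib_left)

definition mat_sum :: "('x \<Rightarrow> 'a :: comm_monoid_add mat) \<Rightarrow> 'x set \<Rightarrow> nat \<Rightarrow> nat \<Rightarrow> 'a mat" where
  "mat_sum F S n m = mat n m (\<lambda>(i,j). \<Sum>x\<in>S. F x $$ (i,j))"

lemma mat_sum_carrier [simp]: "mat_sum F S n m \<in> carrier_mat n m"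
  and mat_sum_dim [simp]: "dim_row (mat_sum F S n m) = n" "dim_col (mat_sum F S n m) = m"
  unfolding mat_sum_def by auto

lemma mat_sum_index: "i < n \<Longrightarrow> j < m \<Longrightarrow> mat_sum F S n m $$ (i,j) = (\<Sum>x\<in>S. F x $$ (i,j))"
  unfolding mat_sum_def by auto

lemma mat_sum_cong: "(\<And>x. x \<in> S \<Longrightarrow> F x = F' x) \<Longrightarrow> mat_sum F S n m = mat_sum F' S n m"
  unfolding mat_sum_def by auto

lemma mat_sum_reindex_bij_betw:
  "bij_betw \<phi> S T \<Longrightarrow> mat_sum (\<lambda>x. F (\<phi> x)) S n m = mat_sum F T n m"
proof -
  assume "bij_betw \<phi> S T"
  from sum.reindex_bij_betw[OF this] show ?thesis
    unfolding mat_sum_def by (intro eq_matI) auto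
qed

lemma mult_mat_sum:
  fixes A :: "'a :: comm_semiring_0 mat"
  assumes A: "A \<in> carrier_mat n m" and F: "\<And>x. x \<in> S \<Longrightarrow> F x \<in> carrier_mat m k"
  shows "A * mat_sum F S m k = mat_sum (\<lambda>x. A * F x) S n k"
proof (rule eq_matI)
  fix i j assume "i < dim_row (mat_sum (\<lambda>x. A * F x) S n k)" "j < dim_col (mat_sum (\<lambda>x. A * F x) S n k)"
  then have i: "i < n" and j: "j < k" by auto
  have "(A * mat_sum F S m k) $$ (i,j) = (\<Sum>l<m. A $$ (i,l) * (\<Sum>x\<in>S. F x $$ (l,j)))"
    using A i j by (auto simp: scalar_prod_def mat_sum_index atLeast0LessThan intro!: sum.cong)
  also have "\<dots> = (\<Sum>x\<in>S. \<Sum>l<m. A $$ (i,l) * F x $$ (l,j))"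
    by (simp add: sum_distrib_left sum.swap[of _ S])
  also have "\<dots> = mat_sum (\<lambda>x. A * F x) S n k $$ (i,j)"
    using A F i j by (auto simp: mat_mult_index_sum[OF A F] mat_sum_index intro!: sum.cong)
  finally show "(A * mat_sum F S m k) $$ (i,j) = mat_sum (\<lambda>x. A * F x) S n k $$ (i,j)" .
qed (use A in auto)

lemma mat_sum_mult:
  fixes B :: "'a :: comm_semiring_1 mat"
  assumes B: "B \<in> carrier_mat m k" and F: "\<And>x. x \<in> S \<Longrightarrow> F x \<in> carrier_mat n m"
  shows "mat_sum F S n m * B = mat_sum (\<lambda>x. F x * B) S n k"
proof (rule eq_matI)
  fix i j assume "i < dim_row (mat_sum (\<lambda>x. F x * B) S n k)" "j < dim_col (mat_sum (\<lambda>x. F x * B) S n k)"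
  then have i: "i < n" and j: "j < k" by auto
  have "(mat_sum F S n m * B) $$ (i,j) = (\<Sum>l<m. (\<Sum>x\<in>S. F x $$ (i,l)) * B $$ (l,j))"
    using B i j by (auto simp: scalar_prod_def mat_sum_index atLeast0LessThan intro!: sum.cong)
  also have "\<dots> = (\<Sum>x\<in>S. \<Sum>l<m. F x $$ (i,l) * B $$ (l,j))"
    by (simp add: sum_distrib_right sum.swap[of _ S])
  also have "\<dots> = mat_sum (\<lambda>x. F x * B) S n k $$ (i,j)"
    using B F i j by (auto simp: mat_mult_index_sum[OF F B] mat_sum_index intro!: sum.cong)
  finally show "(mat_sum F S n m * B) $$ (i,j) = mat_sum (\<lambda>x. F x * B) S n k $$ (i,j)" .
qed (use B in auto)

lemma mat_trace_mat_sum: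
  assumes "\<And>x. x \<in> S \<Longrightarrow> F x \<in> carrier_mat n n"
  shows "mat_trace (mat_sum F S n n) = (\<Sum>x\<in>S. mat_trace (F x))"
proof -
  have "mat_trace (mat_sum F S n n) = (\<Sum>i<n. \<Sum>x\<in>S. F x $$ (i, i))"
    unfolding mat_trace_def by (auto simp: mat_sum_index)
  also have "\<dots> = (\<Sum>x\<in>S. \<Sum>i<n. F x $$ (i, i))" by (rule sum.swap)
  also have "\<dots> = (\<Sum>x\<in>S. mat_trace (F x))" using assms by (auto simp: mat_trace_def intro!: sum.cong)
  finally show ?thesis .
qed

definition inj_mat :: "complex mat \<Rightarrow> bool" where
  "inj_mat C \<longleftrightarrow> (\<forall>x\<in>carrier_vec (dim_col C). C *\<^sub>v x = 0\<^sub>v (dim_row C) \<longrightarrow> x = 0\<^sub>v (dim_col C))"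

lemma inj_matI:
  "C \<in> carrier_mat n m \<Longrightarrow> (\<And>x. x \<in> carrier_vec m \<Longrightarrow> C *\<^sub>v x = 0\<^sub>v n \<Longrightarrow> x = 0\<^sub>v m) \<Longrightarrow> inj_mat C"
  unfolding inj_mat_def by auto

lemma inj_matD: "inj_mat C \<Longrightarrow> C \<in> carrier_mat n m \<Longrightarrow> x \<in> carrier_vec m \<Longrightarrow> C *\<^sub>v x = 0\<^sub>v n \<Longrightarrow> x = 0\<^sub>v m"
  unfolding inj_mat_def by auto

lemma inj_mat_cancel:
  assumes C: "C \<in> carrier_mat n m" "inj_mat C" and x: "x \<in> carrier_vec m" and y: "y \<in> carrier_vec m"
    and eq: "C *\<^sub>v x = C *\<^sub>v y"
  shows "x = y"
proof -
  have "C *\<^sub>v (x - y) = 0\<^sub>v n" using C x y eq by (simp add: mult_minus_distrib_mat_vec)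
  then have "x - y = 0\<^sub>v m" using inj_matD[OF C(2,1)] x y by auto
  then have "\<forall>i<m. (x - y) $ i = 0" by auto
  then show ?thesis using x y by (intro eq_vecI) auto
qed

lemma inj_mat_cancel_mat:
  assumes C: "C \<in> carrier_mat n m" "inj_mat C" and X: "X \<in> carrier_mat m k" and Y: "Y \<in> carrier_mat m k"
    and eq: "C * X = C * Y"
  shows "X = Y"
proof (rule mat_eqI_mult_vec[OF X Y])
  fix x :: "complex vec" assume x: "x \<in> carrier_vec k"
  have "C *\<^sub>v (X *\<^sub>v x) = C *\<^sub>v (Y *\<^sub>v x)"
    using C X Y x eq by (metis assoc_mult_mat_vec)
  then show "X *\<^sub>v x = Y *\<^sub>v x" using inj_mat_cancel[OF C] X Y x by auto
qed

lemma inj_mat_mult: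
  assumes B: "B \<in> carrier_mat n m" "inj_mat B" and C: "C \<in> carrier_mat m k" "inj_mat C"
  shows "inj_mat (B * C)"
proof (rule inj_matI)
  show "B * C \<in> carrier_mat n k" using B C by auto
  fix x :: "complex vec" assume x: "x \<in> carrier_vec k" and "(B * C) *\<^sub>v x = 0\<^sub>v n"
  then have "B *\<^sub>v (C *\<^sub>v x) = 0\<^sub>v n" using B C by auto
  then have "C *\<^sub>v x = 0\<^sub>v m" using inj_matD[OF B(2,1)] C x by auto
  then show "x = 0\<^sub>v k" using inj_matD[OF C(2,1) x] by auto
qed

text \<open>A wide matrix has a nontrivial kernel: pad it with zero rows to a singular square matrix.\<close>

lemma inj_mat_dim_le:
  assumes C: "C \<in> carrier_mat m k" "inj_mat C"
  shows "k \<le> m"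
proof (rule ccontr)
  assume "\<not> k \<le> m"
  then have km: "m < k" by auto
  define D where "D = mat k k (\<lambda>(i,j). if i < m then C $$ (i,j) else 0)"
  have D: "D \<in> carrier_mat k k" unfolding D_def by auto
  have "D = mat\<^sub>r k k (\<lambda>i. if i = m then 0\<^sub>v k else row D i)"
    by (rule eq_matI) (auto simp: D_def mat_of_rows_def)
  then have "det D = 0" using det_row_0[OF km, of "\<lambda>i. row D i"] D by auto
  then obtain v where v: "v \<in> carrier_vec k" "v \<noteq> 0\<^sub>v k" "D *\<^sub>v v = 0\<^sub>v k"
    using det_0_iff_vec_prod_zero[OF D] by auto
  have "C *\<^sub>v v = 0\<^sub>v m"
  proof (rule eq_vecI)
    fix i assume "i < dim_vec (0\<^sub>v m :: complex vec)"
    then have i: "i < m" by auto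
    have "row C i = row D i" using C i km by (auto simp: D_def)
    then have "(C *\<^sub>v v) $ i = (D *\<^sub>v v) $ i" using C D i km by auto
    then show "(C *\<^sub>v v) $ i = 0\<^sub>v m $ i" using v i km by auto
  qed (use C in auto)
  then show False using inj_matD[OF C(2,1) v(1)] v(2) by auto
qed

lemma inj_mat_square_surj:
  assumes C: "C \<in> carrier_mat m m" "inj_mat C"
  shows "(\<lambda>x. C *\<^sub>v x) ` carrier_vec m = carrier_vec m"
proof -
  have "det C \<noteq> 0" using det_0_iff_vec_prod_zero[OF C(1)] inj_matD[OF C(2,1)] by auto
  from det_non_zero_imp_unit[OF C(1) this, of "()"]
  obtain D where D: "D \<in> carrier_mat m m" "C * D = 1\<^sub>m m"
    unfolding Units_def ring_mat_def by auto
  have "C *\<^sub>v (D *\<^sub>v y) = y" if "y \<in> carrier_vec m" for y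
    using C D that by (metis assoc_mult_mat_vec one_mult_mat_vec)
  then have "y \<in> (\<lambda>x. C *\<^sub>v x) ` carrier_vec m" if "y \<in> carrier_vec m" for y
    using D that by (metis image_eqI mult_mat_vec_carrier)
  then show ?thesis using C by auto
qed

lemma surj_mat_right_inverse:
  fixes T :: "complex mat"
  assumes T: "T \<in> carrier_mat n m" and surj: "(\<lambda>x. T *\<^sub>v x) ` carrier_vec m = carrier_vec n"
  obtains S where "S \<in> carrier_mat m n" "T * S = 1\<^sub>m n"
proof -
  have "\<forall>i. \<exists>x. i < n \<longrightarrow> x \<in> carrier_vec m \<and> T *\<^sub>v x = unit_vec n i"
    using surj by (metis imageE unit_vec_carrier)
  then obtain s where s: "\<And>i. i < n \<Longrightarrow> s i \<in> carrier_vec m \<and> T *\<^sub>v s i = unit_vec n i"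
    by metis
  define S where "S = mat_of_cols m (map s [0..<n])"
  have S: "S \<in> carrier_mat m n" unfolding S_def by auto
  have "T * S = 1\<^sub>m n"
  proof (rule eq_matI)
    fix i j assume i: "i < dim_row (1\<^sub>m n)" and j: "j < dim_col (1\<^sub>m n)"
    then have "(T * S) $$ (i,j) = row T i \<bullet> s j" using T S s by (auto simp: S_def)
    also have "\<dots> = (T *\<^sub>v s j) $ i" using T i by auto
    finally show "(T * S) $$ (i,j) = 1\<^sub>m n $$ (i,j)" using s[of j] i j by auto
  qed (use T S in auto)
  with S that show ?thesis by blast
qed

lemma inj_mat_right_inverse_imp_left_inverse:
  assumes T: "T \<in> carrier_mat n m" "inj_mat T" and S: "S \<in> carrier_mat m n" and TS: "T * S = 1\<^sub>m n"
  shows "S * T = 1\<^sub>m m"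
proof (rule inj_mat_cancel_mat[OF T])
  have "T * (S * T) = (T * S) * T" using T S by (simp add: assoc_mult_mat)
  then show "T * (S * T) = T * 1\<^sub>m m" using TS T by auto
qed (use S T in auto)

lemma mult_mat_vec_intertwine:
  assumes "A \<in> carrier_mat n n" "T \<in> carrier_mat n m" "B \<in> carrier_mat m m" "A * T = T * B"
    and "x \<in> carrier_vec m"
  shows "A *\<^sub>v (T *\<^sub>v x) = T *\<^sub>v (B *\<^sub>v x)"
  using assms by (metis assoc_mult_mat_vec)

lemma mult_commute_mult:
  assumes X: "X \<in> carrier_mat n n" and A: "A \<in> carrier_mat n n" and B: "B \<in> carrier_mat n n"
    and XA: "X * A = A * X" and XB: "X * B = B * X"
  shows "X * (A * B) = (A * B) * X"
proof -
  have "X * (A * B) = (A * X) * B" unfolding XA[symmetric] by (rule assoc_mult_mat[symmetric, OF X A B])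
  also have "\<dots> = A * (B * X)" unfolding XB[symmetric] by (rule assoc_mult_mat[OF A X B])
  also have "\<dots> = (A * B) * X" by (rule assoc_mult_mat[symmetric, OF A B X])
  finally show ?thesis .
qed

lemma subspace_vecD:
  assumes "subspace_vec n W"
  shows "W \<subseteq> carrier_vec n" "0\<^sub>v n \<in> W" "\<And>x y. x \<in> W \<Longrightarrow> y \<in> W \<Longrightarrow> x + y \<in> W"
    "\<And>c x. x \<in> W \<Longrightarrow> c \<cdot>\<^sub>v x \<in> W"
  using assms unfolding subspace_vec_def by auto

lemma subspace_vec_kernel:
  assumes "T \<in> carrier_mat n m"
  shows "subspace_vec m {x \<in> carrier_vec m. T *\<^sub>v x = 0\<^sub>v n}"
  using assms unfolding subspace_vec_def
  by (intro conjI ballI allI) (auto simp: mult_add_distrib_mat_vec mult_mat_vec)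

lemma subspace_vec_image:
  assumes T: "T \<in> carrier_mat n m"
  shows "subspace_vec n ((\<lambda>x. T *\<^sub>v x) ` carrier_vec m)"
  unfolding subspace_vec_def
proof (intro conjI ballI allI)
  show "0\<^sub>v n \<in> (\<lambda>x. T *\<^sub>v x) ` carrier_vec m" using T by (auto intro!: image_eqI[of _ _ "0\<^sub>v m"])
  fix x y assume "x \<in> (\<lambda>x. T *\<^sub>v x) ` carrier_vec m" "y \<in> (\<lambda>x. T *\<^sub>v x) ` carrier_vec m"
  then show "x + y \<in> (\<lambda>x. T *\<^sub>v x) ` carrier_vec m"
    using T by (auto simp: mult_add_distrib_mat_vec[symmetric] intro!: image_eqI)
next
  fix c :: complex and x assume "x \<in> (\<lambda>x. T *\<^sub>v x) ` carrier_vec m"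
  then show "c \<cdot>\<^sub>v x \<in> (\<lambda>x. T *\<^sub>v x) ` carrier_vec m"
    using T by (auto simp: mult_mat_vec[symmetric] intro!: image_eqI)
qed (use T in auto)

lemma subspace_vec_eigenspace:
  assumes "(A :: complex mat) \<in> carrier_mat n n"
  shows "subspace_vec n {v \<in> carrier_vec n. A *\<^sub>v v = c \<cdot>\<^sub>v v}"
  using assms unfolding subspace_vec_def
  by (intro conjI ballI allI) (auto simp: mult_add_distrib_mat_vec smult_add_distrib_vec mult_mat_vec
      smult_smult_assoc mult.commute)

lemma inj_mat_append_col:
  assumes C: "C \<in> carrier_mat m k" "inj_mat C" and w: "w \<in> carrier_vec m"
    and w_notin: "w \<notin> (\<lambda>x. C *\<^sub>v x) ` carrier_vec k"
  defines "C' \<equiv> mat m (Suc k) (\<lambda>(i,j). if j < k then C $$ (i,j) else w $ i)"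
  shows "C' \<in> carrier_mat m (Suc k)" "inj_mat C'"
    and "\<And>x. x \<in> carrier_vec (Suc k) \<Longrightarrow> C' *\<^sub>v x = C *\<^sub>v vec k (\<lambda>i. x $ i) + x $ k \<cdot>\<^sub>v w"
proof -
  show C': "C' \<in> carrier_mat m (Suc k)" unfolding C'_def by auto
  show split: "C' *\<^sub>v x = C *\<^sub>v vec k (\<lambda>i. x $ i) + x $ k \<cdot>\<^sub>v w" if x: "x \<in> carrier_vec (Suc k)" for x
  proof (rule eq_vecI)
    fix i assume "i < dim_vec (C *\<^sub>v vec k (\<lambda>i. x $ i) + x $ k \<cdot>\<^sub>v w)"
    then have i: "i < m" using C w by auto
    have "(C' *\<^sub>v x) $ i = (\<Sum>j<Suc k. C' $$ (i,j) * x $ j)"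
      using C' x i by (auto simp: scalar_prod_def atLeast0LessThan mult.commute intro!: sum.cong)
    also have "\<dots> = (\<Sum>j<k. C $$ (i,j) * x $ j) + w $ i * x $ k"
      using i by (simp add: C'_def)
    finally show "(C' *\<^sub>v x) $ i = (C *\<^sub>v vec k (\<lambda>i. x $ i) + x $ k \<cdot>\<^sub>v w) $ i"
      using C w i by (auto simp: scalar_prod_def atLeast0LessThan mult.commute intro!: sum.cong)
  qed (use C C' w in auto)
  show "inj_mat C'"
  proof (rule inj_matI[OF C'])
    fix x :: "complex vec" assume x: "x \<in> carrier_vec (Suc k)" and "C' *\<^sub>v x = 0\<^sub>v m"
    let ?x = "vec k (\<lambda>i. x $ i)"
    have sum0: "C *\<^sub>v ?x + x $ k \<cdot>\<^sub>v w = 0\<^sub>v m" using split[OF x] \<open>C' *\<^sub>v x = 0\<^sub>v m\<close> by simp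
    have xk: "x $ k = 0"
    proof (rule ccontr)
      assume nz: "x $ k \<noteq> 0"
      have "w = C *\<^sub>v ((- 1 / x $ k) \<cdot>\<^sub>v ?x)"
      proof (rule eq_vecI)
        fix i assume "i < dim_vec (C *\<^sub>v ((- 1 / x $ k) \<cdot>\<^sub>v ?x))"
        then have i: "i < m" using C by auto
        have "(C *\<^sub>v ?x) $ i + x $ k * w $ i = 0"
          using arg_cong[OF sum0, of "\<lambda>v. v $ i"] i C w by auto
        then show "w $ i = (C *\<^sub>v ((- 1 / x $ k) \<cdot>\<^sub>v ?x)) $ i"
          using mult_mat_vec[OF C(1), of ?x "- 1 / x $ k"] i C nz by (auto simp: field_simps add_eq_0_iff)
      qed (use C w in auto)
      then show False using w_notin by auto
    qed
    then have "x $ k \<cdot>\<^sub>v w = 0\<^sub>v m" using w by (intro eq_vecI) auto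
    then have "C *\<^sub>v ?x = 0\<^sub>v m" using sum0 C by auto
    then have "?x = 0\<^sub>v k" using inj_matD[OF C(2,1)] by auto
    then have "\<forall>i<k. x $ i = 0" by (metis index_vec index_zero_vec(1))
    then show "x = 0\<^sub>v (Suc k)" using xk x by (intro eq_vecI) (auto simp: less_Suc_eq)
  qed
qed

lemma subspace_vec_basis_extend:
  assumes W: "subspace_vec m W"
    and "C \<in> carrier_mat m k" "inj_mat C" "\<forall>x\<in>carrier_vec k. C *\<^sub>v x \<in> W"
  shows "\<exists>k' C'. C' \<in> carrier_mat m k' \<and> inj_mat C' \<and> (\<lambda>x. C' *\<^sub>v x) ` carrier_vec k' = W"
  using assms(2-)
proof (induction "m - k" arbitrary: k C rule: less_induct)
  case less
  show ?case
  proof (cases "W \<subseteq> (\<lambda>x. C *\<^sub>v x) ` carrier_vec k")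
    case True
    then show ?thesis using less.prems by blast
  next
    case False
    then obtain w where wW: "w \<in> W" and w_notin: "w \<notin> (\<lambda>x. C *\<^sub>v x) ` carrier_vec k" by auto
    have w: "w \<in> carrier_vec m" using wW subspace_vecD(1)[OF W] by auto
    define C' where "C' = mat m (Suc k) (\<lambda>(i,j). if j < k then C $$ (i,j) else w $ i)"
    note C' = inj_mat_append_col[OF less.prems(1,2) w w_notin, folded C'_def]
    have "m - Suc k < m - k" using inj_mat_dim_le[OF C'(1,2)] by auto
    moreover have "\<forall>x\<in>carrier_vec (Suc k). C' *\<^sub>v x \<in> W"
      using C'(3) less.prems(3) wW subspace_vecD(3,4)[OF W] by simp
    ultimately show ?thesis using less.hyps[OF _ C'(1,2)] by simp
  qed
qed

lemma subspace_vec_basis: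
  assumes W: "subspace_vec m W"
  obtains C k where "C \<in> carrier_mat m k" "inj_mat C" "(\<lambda>x. C *\<^sub>v x) ` carrier_vec k = W"
    "W \<noteq> {0\<^sub>v m} \<longrightarrow> 0 < k" "W \<noteq> carrier_vec m \<longrightarrow> k < m"
proof -
  have C0: "(0\<^sub>m m 0 :: complex mat) \<in> carrier_mat m 0" "inj_mat (0\<^sub>m m 0 :: complex mat)"
    by (auto intro!: inj_matI)
  moreover have "\<forall>x\<in>carrier_vec 0. (0\<^sub>m m 0 :: complex mat) *\<^sub>v x \<in> W"
    using subspace_vecD(2)[OF W] by simp
  ultimately obtain k C where C: "C \<in> carrier_mat m k" "inj_mat C" and im: "(\<lambda>x. C *\<^sub>v x) ` carrier_vec k = W"
    using subspace_vec_basis_extend[OF W] by blast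
  have "W = {0\<^sub>v m}" if "k = 0"
    using im C that by (auto simp: scalar_prod_def intro!: eq_vecI image_eqI[of _ _ "0\<^sub>v 0"])
  moreover have "W = carrier_vec m" if "k = m" using inj_mat_square_surj C im that by auto
  moreover have "k \<le> m" using inj_mat_dim_le[OF C] .
  ultimately show ?thesis using that C im by (metis le_neq_implies_less not_gr0)
qed

lemma mat_adjoint_carrier [simp]: "A \<in> carrier_mat n m \<Longrightarrow> mat_adjoint A \<in> carrier_mat m n"
  and mat_adjoint_dim [simp]: "dim_row (mat_adjoint A) = dim_col A" "dim_col (mat_adjoint A) = dim_row A"
  unfolding mat_adjoint_def by auto

lemma mat_adjoint_index [simp]:
  "i < dim_col A \<Longrightarrow> j < dim_row A \<Longrightarrow> mat_adjoint A $$ (i,j) = conjugate (A $$ (j,i))"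
  unfolding mat_adjoint_def by (simp add: mat_of_rows_def)

lemma mat_adjoint_adjoint [simp]: "mat_adjoint (mat_adjoint (A :: complex mat)) = A"
  by (rule eq_matI) auto

lemma mat_adjoint_one [simp]: "mat_adjoint (1\<^sub>m n :: complex mat) = 1\<^sub>m n"
  by (rule eq_matI) auto

lemma mat_adjoint_mult:
  fixes A B :: "complex mat"
  assumes A: "A \<in> carrier_mat n m" and B: "B \<in> carrier_mat m k"
  shows "mat_adjoint (A * B) = mat_adjoint B * mat_adjoint A"
proof (rule eq_matI)
  fix i j assume "i < dim_row (mat_adjoint B * mat_adjoint A)" "j < dim_col (mat_adjoint B * mat_adjoint A)"
  then have i: "i < k" and j: "j < n" using A B by auto
  have "mat_adjoint (A * B) $$ (i,j) = conjugate (\<Sum>l<m. A $$ (j,l) * B $$ (l,i))"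
    using A B i j by (simp add: mat_mult_index_sum[OF A B j i])
  also have "\<dots> = (\<Sum>l<m. conjugate (B $$ (l,i)) * conjugate (A $$ (j,l)))"
    by (simp add: mult.commute)
  also have "\<dots> = (mat_adjoint B * mat_adjoint A) $$ (i,j)"
    using A B i j by (simp add: mat_mult_index_sum[OF mat_adjoint_carrier[OF B] mat_adjoint_carrier[OF A] i j])
  finally show "mat_adjoint (A * B) $$ (i,j) = (mat_adjoint B * mat_adjoint A) $$ (i,j)" .
qed (use A B in auto)

lemma pow_mat_add:
  assumes A: "A \<in> carrier_mat n n"
  shows "A ^\<^sub>m (a + b) = A ^\<^sub>m a * A ^\<^sub>m b"
proof (induction b)
  case (Suc b)
  have "A ^\<^sub>m a * A ^\<^sub>m b * A = A ^\<^sub>m a * (A ^\<^sub>m b * A)"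
    using A by (intro assoc_mult_mat) auto
  then show ?case using Suc by simp
qed (use A in simp)

lemma mat_adjoint_pow:
  assumes A: "(A :: complex mat) \<in> carrier_mat n n"
  shows "mat_adjoint (A ^\<^sub>m k) = mat_adjoint A ^\<^sub>m k"
proof (induction k)
  case (Suc k)
  have "mat_adjoint (A ^\<^sub>m Suc k) = mat_adjoint A * mat_adjoint A ^\<^sub>m k"
    using A Suc by (simp add: mat_adjoint_mult[OF pow_carrier_mat[OF A] A])
  also have "\<dots> = mat_adjoint A ^\<^sub>m (1 + k)"
    using pow_mat_add[of "mat_adjoint A" n 1 k] A by simp
  finally show ?case by simp
qed (use A in simp)

text \<open>The diagonal of \<open>A\<^sup>H A\<close> consists of the squared column norms of \<open>A\<close>.\<close>

lemma mat_adjoint_mult_self_eq_zero: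
  assumes A: "(A :: complex mat) \<in> carrier_mat n m" and zero: "mat_adjoint A * A = 0\<^sub>m m m"
  shows "A = 0\<^sub>m n m"
proof (rule eq_matI)
  fix i j assume "i < dim_row (0\<^sub>m n m :: complex mat)" "j < dim_col (0\<^sub>m n m :: complex mat)"
  then have i: "i < n" and j: "j < m" by auto
  have "(mat_adjoint A * A) $$ (j,j) = (\<Sum>l<n. conjugate (A $$ (l,j)) * A $$ (l,j))"
    using mat_mult_index_sum[OF mat_adjoint_carrier[OF A] A j j] A j by simp
  also have "\<dots> = (\<Sum>l<n. of_real ((cmod (A $$ (l,j)))\<^sup>2))"
    by (intro sum.cong refl) (metis complex_norm_square conjugate_complex_def mult.commute)
  also have "\<dots> = of_real (\<Sum>l<n. (cmod (A $$ (l,j)))\<^sup>2)" by simp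
  finally have "of_real (\<Sum>l<n. (cmod (A $$ (l,j)))\<^sup>2) = (0 :: complex)"
    using zero j by simp
  then have "(\<Sum>l<n. (cmod (A $$ (l,j)))\<^sup>2) = 0"
    by (simp only: of_real_eq_0_iff)
  then have "(cmod (A $$ (i,j)))\<^sup>2 = 0"
    using i by (subst (asm) sum_nonneg_eq_0_iff) auto
  then show "A $$ (i,j) = 0\<^sub>m n m $$ (i,j)" using i j by auto
qed (use A in auto)

lemma hermitian_nilpotent_eq_zero:
  assumes P: "(P :: complex mat) \<in> carrier_mat n n" and herm: "mat_adjoint P = P"
    and nilp: "P ^\<^sub>m k = 0\<^sub>m n n"
  shows "P = 0\<^sub>m n n"
proof -
  have "P ^\<^sub>m (2 ^ j) = 0\<^sub>m n n \<Longrightarrow> P = 0\<^sub>m n n" for j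
  proof (induction j)
    case (Suc j)
    have "mat_adjoint (P ^\<^sub>m 2 ^ j) * P ^\<^sub>m 2 ^ j = P ^\<^sub>m (2 ^ Suc j)"
      using mat_adjoint_pow[OF P] herm pow_mat_add[OF P, of "2 ^ j" "2 ^ j"] by (simp add: mult_2)
    then show ?case
      using Suc mat_adjoint_mult_self_eq_zero[OF pow_carrier_mat[OF P]] by simp
  qed (use P in simp)
  moreover obtain d where "2 ^ k = k + d" using less_exp[of k] le_Suc_ex less_imp_le by blast
  then have "P ^\<^sub>m (2 ^ k) = 0\<^sub>m n n" using pow_mat_add[OF P, of k d] nilp P by simp
  ultimately show ?thesis by blast
qed

lemma strictly_upper_triangular_pow:
  fixes B :: "'a :: comm_semiring_1 mat"
  assumes B: "B \<in> carrier_mat n n" and upper: "\<And>i j. i < n \<Longrightarrow> j < n \<Longrightarrow> j \<le> i \<Longrightarrow> B $$ (i,j) = 0"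
  shows "i < n \<Longrightarrow> j < n \<Longrightarrow> j < i + k \<Longrightarrow> (B ^\<^sub>m k) $$ (i,j) = 0"
proof (induction k arbitrary: i j)
  case (Suc k)
  have "(B ^\<^sub>m Suc k) $$ (i,j) = (\<Sum>l<n. (B ^\<^sub>m k) $$ (i,l) * B $$ (l,j))"
    using mat_mult_index_sum[OF pow_carrier_mat[OF B] B Suc.prems(1,2)] by simp
  also have "\<dots> = 0"
  proof (rule sum.neutral, rule ballI)
    fix l assume l: "l \<in> {..<n}"
    show "(B ^\<^sub>m k) $$ (i,l) * B $$ (l,j) = 0"
    proof (cases "l < i + k")
      case True
      then show ?thesis using Suc.IH[of i l] Suc.prems l by auto
    next
      case False
      then show ?thesis using upper[of l j] l Suc.prems by auto
    qed
  qed
  finally show ?case .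
qed (use B in auto)

text \<open>Via a Schur decomposition \<open>A = P B Q\<close> with \<open>B\<close> upper triangular; its diagonal holds the
  eigenvalues, so \<open>B\<close> is strictly upper triangular.\<close>

lemma pow_mat_dim_eq_zero_if_eigenvalues_zero:
  assumes A: "(A :: complex mat) \<in> carrier_mat n n" and ev: "\<And>c. eigenvalue A c \<Longrightarrow> c = 0"
  shows "A ^\<^sub>m n = 0\<^sub>m n n"
proof -
  obtain as where cp: "char_poly A = (\<Prod>a\<leftarrow>as. [:- a, 1:])"
    using char_poly_factorized[OF A] by auto
  have as0: "a = 0" if "a \<in> set as" for a
  proof -
    have "poly (char_poly A) a = 0" unfolding cp poly_prod_list_zero_iff using that by auto
    then show "a = 0" using ev eigenvalue_root_char_poly[OF A] by auto
  qed
  obtain B P Q where sd: "schur_decomposition A as = (B,P,Q)" by (cases "schur_decomposition A as") auto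
  from schur_decomposition[OF A cp sd]
  have sim: "similar_mat_wit A B P Q" and ut: "upper_triangular B" and dg: "diag_mat B = as" by auto
  have B: "B \<in> carrier_mat n n" and PQ: "P \<in> carrier_mat n n" "Q \<in> carrier_mat n n"
    using sim A unfolding similar_mat_wit_def by (auto simp: Let_def)
  have "B $$ (i,j) = 0" if "i < n" "j < n" "j \<le> i" for i j
  proof (cases "j = i")
    case True
    have "B $$ (i,i) \<in> set (diag_mat B)" unfolding diag_mat_def using that B by auto
    then show ?thesis using True dg as0 by auto
  qed (use ut that B in auto)
  then have "B ^\<^sub>m n = 0\<^sub>m n n"
    by (intro eq_matI) (use strictly_upper_triangular_pow[OF B] B in auto)
  then show ?thesis using similar_mat_wit_pow_id[OF sim, of n] PQ by simp
qed

section \<open>Representations of finite groups\<close>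

lemma (in group) inv_mult_cancel_left: "x \<in> carrier G \<Longrightarrow> y \<in> carrier G \<Longrightarrow> inv x \<otimes> (x \<otimes> y) = y"
  and mult_inv_cancel_left: "x \<in> carrier G \<Longrightarrow> y \<in> carrier G \<Longrightarrow> x \<otimes> (inv x \<otimes> y) = y"
  by (simp_all add: m_assoc[symmetric])

locale finite_group = group G for G (structure) +
  assumes finite_carrier: "finite (carrier G)"
begin

lemma card_carrier_pos: "0 < card (carrier G)"
  using finite_carrier by (auto simp: card_gt_0_iff)

lemma representation_carrier: "representation G n \<rho> \<Longrightarrow> h \<in> carrier G \<Longrightarrow> \<rho> h \<in> carrier_mat n n"
  and representation_one: "representation G n \<rho> \<Longrightarrow> \<rho> \<one> = 1\<^sub>m n"
  and representation_mult:
    "representation G n \<rho> \<Longrightarrow> h \<in> carrier G \<Longrightarrow> k \<in> carrier G \<Longrightarrow> \<rho> (h \<otimes> k) = \<rho> h * \<rho> k"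
  unfolding representation_def by auto

lemma representation_inv_mult: "representation G n \<rho> \<Longrightarrow> h \<in> carrier G \<Longrightarrow> \<rho> (inv h) * \<rho> h = 1\<^sub>m n"
  using representation_mult[of n \<rho> "inv h" h] representation_one[of n \<rho>] by auto

lemma irreducible_repD:
  assumes "irreducible_rep G n \<rho>"
  shows "representation G n \<rho>" "0 < n"
    and "\<And>W. subspace_vec n W \<Longrightarrow> \<forall>h\<in>carrier G. \<forall>w\<in>W. \<rho> h *\<^sub>v w \<in> W \<Longrightarrow> W \<noteq> {0\<^sub>v n} \<Longrightarrow>
      W = carrier_vec n"
  using assms unfolding irreducible_rep_def by blast+

lemma irr_charsE:
  assumes "\<chi> \<in> irr_chars G"
  obtains n \<rho> where "irreducible_rep G n \<rho>" "\<chi> = (\<lambda>x\<in>carrier G. mat_trace (\<rho> x))"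
  using assms unfolding irr_chars_def by blast

lemma irr_chars_one:
  assumes "\<chi> \<in> irr_chars G"
  obtains n where "0 < n" "\<chi> \<one> = of_nat n"
  using assms
proof (rule irr_charsE)
  fix n \<rho> assume \<rho>: "irreducible_rep G n \<rho>" and \<chi>: "\<chi> = (\<lambda>x\<in>carrier G. mat_trace (\<rho> x))"
  have "\<chi> \<one> = of_nat n" using \<chi> representation_one[OF irreducible_repD(1)[OF \<rho>]] by simp
  with irreducible_repD(2)[OF \<rho>] show thesis by (rule that)
qed

subsection \<open>Schur's lemma\<close>

lemma irreducible_intertwiner_invertible:
  assumes \<rho>: "irreducible_rep G n \<rho>" and \<sigma>: "irreducible_rep G m \<sigma>" and T: "T \<in> carrier_mat n m"
    and inter: "\<forall>h\<in>carrier G. \<rho> h * T = T * \<sigma> h" and nonzero: "T \<noteq> 0\<^sub>m n m"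
  obtains S where "S \<in> carrier_mat m n" "T * S = 1\<^sub>m n" "S * T = 1\<^sub>m m"
proof -
  note carr = representation_carrier[OF irreducible_repD(1)[OF \<rho>]]
    representation_carrier[OF irreducible_repD(1)[OF \<sigma>]]
  define K where "K = {x \<in> carrier_vec m. T *\<^sub>v x = 0\<^sub>v n}"
  have "\<forall>h\<in>carrier G. \<forall>x\<in>K. \<sigma> h *\<^sub>v x \<in> K"
  proof (intro ballI)
    fix h x assume h: "h \<in> carrier G" and "x \<in> K"
    then have x: "x \<in> carrier_vec m" "T *\<^sub>v x = 0\<^sub>v n" by (auto simp: K_def)
    have "T *\<^sub>v (\<sigma> h *\<^sub>v x) = \<rho> h *\<^sub>v (T *\<^sub>v x)"
      using mult_mat_vec_intertwine[OF carr(1)[OF h] T carr(2)[OF h] _ x(1)] inter h by simp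
    also have "\<dots> = 0\<^sub>v n" using x(2) carr(1)[OF h] by simp
    finally show "\<sigma> h *\<^sub>v x \<in> K" using x carr(2)[OF h] by (simp add: K_def)
  qed
  moreover have "K \<noteq> carrier_vec m"
    using nonzero mat_eqI_mult_vec[OF T zero_carrier_mat] by (auto simp: K_def)
  ultimately have "K = {0\<^sub>v m}"
    using irreducible_repD(3)[OF \<sigma> subspace_vec_kernel[OF T, folded K_def]] by blast
  then have inj: "inj_mat T" by (intro inj_matI[OF T]) (auto simp: K_def)
  define I where "I = (\<lambda>x. T *\<^sub>v x) ` carrier_vec m"
  have "\<forall>h\<in>carrier G. \<forall>y\<in>I. \<rho> h *\<^sub>v y \<in> I"
  proof (intro ballI)
    fix h y assume h: "h \<in> carrier G" and "y \<in> I"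
    then obtain x where x: "x \<in> carrier_vec m" "y = T *\<^sub>v x" by (auto simp: I_def)
    have "\<rho> h *\<^sub>v y = T *\<^sub>v (\<sigma> h *\<^sub>v x)"
      using mult_mat_vec_intertwine[OF carr(1)[OF h] T carr(2)[OF h] _ x(1)] inter h x(2) by simp
    then show "\<rho> h *\<^sub>v y \<in> I" using x carr(2)[OF h] by (auto simp: I_def)
  qed
  moreover have "I \<noteq> {0\<^sub>v n}"
    using nonzero mat_eqI_mult_vec[OF T zero_carrier_mat] by (auto simp: I_def)
  ultimately have "I = carrier_vec n"
    using irreducible_repD(3)[OF \<rho> subspace_vec_image[OF T, folded I_def]] by blast
  then obtain S where "S \<in> carrier_mat m n" "T * S = 1\<^sub>m n"
    using surj_mat_right_inverse[OF T] unfolding I_def by blast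
  with inj_mat_right_inverse_imp_left_inverse[OF T inj] that show ?thesis by blast
qed

lemma irreducible_intertwiner_trace_eq:
  assumes \<rho>: "irreducible_rep G n \<rho>" and \<sigma>: "irreducible_rep G m \<sigma>" and T: "T \<in> carrier_mat n m"
    and inter: "\<forall>h\<in>carrier G. \<rho> h * T = T * \<sigma> h" and nonzero: "T \<noteq> 0\<^sub>m n m"
    and h: "h \<in> carrier G"
  shows "mat_trace (\<sigma> h) = mat_trace (\<rho> h)"
proof -
  obtain S where S: "S \<in> carrier_mat m n" "T * S = 1\<^sub>m n" "S * T = 1\<^sub>m m"
    using irreducible_intertwiner_invertible[OF assms(1-5)] .
  have \<rho>h: "\<rho> h \<in> carrier_mat n n" and \<sigma>h: "\<sigma> h \<in> carrier_mat m m"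
    using representation_carrier irreducible_repD(1) \<rho> \<sigma> h by blast+
  have "mat_trace (\<sigma> h) = mat_trace (S * (T * \<sigma> h))"
    using S T \<sigma>h by (simp add: assoc_mult_mat[symmetric])
  also have "\<dots> = mat_trace (S * (\<rho> h * T))" using inter h by simp
  also have "\<dots> = mat_trace ((\<rho> h * T) * S)"
    using S \<rho>h T by (intro mat_trace_mult_comm) auto
  also have "\<dots> = mat_trace (\<rho> h)" using S T \<rho>h by simp
  finally show ?thesis .
qed

lemma schur_scalar:
  assumes \<rho>: "irreducible_rep G n \<rho>" and A: "A \<in> carrier_mat n n"
    and comm: "\<forall>h\<in>carrier G. \<rho> h * A = A * \<rho> h"
  obtains c where "A = c \<cdot>\<^sub>m 1\<^sub>m n"
proof -
  obtain c where "eigenvalue A c"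
    using spectrum_non_empty[OF A irreducible_repD(2)[OF \<rho>]] unfolding spectrum_def by auto
  then obtain v where v: "v \<in> carrier_vec n" "v \<noteq> 0\<^sub>v n" "A *\<^sub>v v = c \<cdot>\<^sub>v v"
    unfolding eigenvalue_def eigenvector_def using A by auto
  define W where "W = {w \<in> carrier_vec n. A *\<^sub>v w = c \<cdot>\<^sub>v w}"
  have "\<forall>h\<in>carrier G. \<forall>w\<in>W. \<rho> h *\<^sub>v w \<in> W"
  proof (intro ballI)
    fix h w assume h: "h \<in> carrier G" and w: "w \<in> W"
    have \<rho>h: "\<rho> h \<in> carrier_mat n n" using representation_carrier irreducible_repD(1)[OF \<rho>] h by blast
    have "A *\<^sub>v (\<rho> h *\<^sub>v w) = \<rho> h *\<^sub>v (c \<cdot>\<^sub>v w)"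
      using mult_mat_vec_intertwine[OF A \<rho>h A] comm h w by (simp add: W_def)
    then show "\<rho> h *\<^sub>v w \<in> W" using \<rho>h w by (simp add: W_def mult_mat_vec)
  qed
  moreover have "W \<noteq> {0\<^sub>v n}" using v unfolding W_def by auto
  ultimately have "W = carrier_vec n"
    using irreducible_repD(3)[OF \<rho> subspace_vec_eigenspace[OF A, of c, folded W_def]] by blast
  then have "A = c \<cdot>\<^sub>m 1\<^sub>m n"
    using A by (intro mat_eqI_mult_vec) (auto simp: W_def smult_one_mat_mult_vec)
  with that show ?thesis .
qed

lemma inv_bij_betw: "bij_betw (\<lambda>h. inv h) (carrier G) (carrier G)"
  by (rule bij_betw_byWitness[where f' = "\<lambda>h. inv h"]) auto

lemma mult_left_bij_betw: "k \<in> carrier G \<Longrightarrow> bij_betw (\<lambda>h. k \<otimes> h) (carrier G) (carrier G)"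
  by (rule bij_betw_byWitness[where f' = "\<lambda>h. inv k \<otimes> h"]) (auto simp: m_assoc[symmetric])

text \<open>Substitute \<open>h \<mapsto> k h\<close> in the sum.\<close>

lemma averaged_intertwiner:
  assumes \<rho>: "representation G n \<rho>" and \<sigma>: "representation G m \<sigma>" and A: "A \<in> carrier_mat n m"
    and k: "k \<in> carrier G"
  defines "T \<equiv> mat_sum (\<lambda>h. \<rho> h * A * \<sigma> (inv h)) (carrier G) n m"
  shows "\<rho> k * T = T * \<sigma> k"
proof -
  note carr = representation_carrier[OF \<rho>] representation_carrier[OF \<sigma>]
  have "\<rho> k * T = mat_sum (\<lambda>h. \<rho> k * (\<rho> h * A * \<sigma> (inv h))) (carrier G) n m"
    unfolding T_def using A carr k by (intro mult_mat_sum) (auto intro!: mult_carrier_mat)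
  also have "\<dots> = mat_sum (\<lambda>h. \<rho> (k \<otimes> h) * A * \<sigma> (inv (k \<otimes> h) \<otimes> k)) (carrier G) n m"
  proof (rule mat_sum_cong)
    fix h assume h: "h \<in> carrier G"
    have "\<rho> k * (\<rho> h * A * \<sigma> (inv h)) = \<rho> k * \<rho> h * A * \<sigma> (inv h)"
      using carr(1)[OF k] carr(1)[OF h] carr(2)[OF inv_closed[OF h]] A
      by (simp add: assoc_mult_mat[of _ n n _ m])
    then show "\<rho> k * (\<rho> h * A * \<sigma> (inv h)) = \<rho> (k \<otimes> h) * A * \<sigma> (inv (k \<otimes> h) \<otimes> k)"
      using h k by (simp add: representation_mult[OF \<rho>] inv_mult_group m_assoc)
  qed
  also have "\<dots> = mat_sum (\<lambda>h. \<rho> h * A * \<sigma> (inv h \<otimes> k)) (carrier G) n m"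
    by (rule mat_sum_reindex_bij_betw[OF mult_left_bij_betw[OF k]])
  also have "\<dots> = mat_sum (\<lambda>h. \<rho> h * A * \<sigma> (inv h) * \<sigma> k) (carrier G) n m"
  proof (rule mat_sum_cong)
    fix h assume h: "h \<in> carrier G"
    have "\<sigma> (inv h \<otimes> k) = \<sigma> (inv h) * \<sigma> k" using representation_mult[OF \<sigma>] h k by simp
    moreover have "\<rho> h * A * (\<sigma> (inv h) * \<sigma> k) = \<rho> h * A * \<sigma> (inv h) * \<sigma> k"
      using carr(1)[OF h] carr(2)[OF inv_closed[OF h]] carr(2)[OF k] A
      by (intro assoc_mult_mat[symmetric]) (auto intro!: mult_carrier_mat)
    ultimately show "\<rho> h * A * \<sigma> (inv h \<otimes> k) = \<rho> h * A * \<sigma> (inv h) * \<sigma> k" by (simp only:)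
  qed
  also have "\<dots> = T * \<sigma> k"
    unfolding T_def using A carr k by (intro mat_sum_mult[symmetric]) (auto intro!: mult_carrier_mat)
  finally show ?thesis .
qed

definition elementary_mat :: "nat \<Rightarrow> nat \<Rightarrow> nat \<Rightarrow> nat \<Rightarrow> complex mat" where
  "elementary_mat n m j k = mat n m (\<lambda>(a,b). if a = j \<and> b = k then 1 else 0)"

lemma elementary_mat_carrier [simp]: "elementary_mat n m j k \<in> carrier_mat n m"
  unfolding elementary_mat_def by auto

lemma mat_trace_elementary_mat: "j < n \<Longrightarrow> k < n \<Longrightarrow> mat_trace (elementary_mat n n j k) = (if j = k then 1 else 0)"
  unfolding mat_trace_def elementary_mat_def by auto

lemma elementary_mat_sandwich_index:
  assumes X: "X \<in> carrier_mat n n" and Y: "Y \<in> carrier_mat m m" and jk: "j < n" "k < m" and il: "i < n" "l < m"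
  shows "(X * elementary_mat n m j k * Y) $$ (i,l) = X $$ (i,j) * Y $$ (k,l)"
proof -
  have XE: "(X * elementary_mat n m j k) $$ (i,b) = (if b = k then X $$ (i,j) else 0)" if b: "b < m" for b
  proof -
    have "(X * elementary_mat n m j k) $$ (i,b) = (\<Sum>a<n. X $$ (i,a) * elementary_mat n m j k $$ (a,b))"
      by (rule mat_mult_index_sum[OF X elementary_mat_carrier il(1) b])
    also have "\<dots> = (\<Sum>a<n. if a = j then (if b = k then X $$ (i,j) else 0) else 0)"
      using b by (intro sum.cong) (auto simp: elementary_mat_def)
    finally show ?thesis using jk by simp
  qed
  have "(X * elementary_mat n m j k * Y) $$ (i,l) = (\<Sum>b<m. (X * elementary_mat n m j k) $$ (i,b) * Y $$ (b,l))"
    by (rule mat_mult_index_sum[OF _ Y il]) (use X in auto)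
  also have "\<dots> = (\<Sum>b<m. if b = k then X $$ (i,j) * Y $$ (k,l) else 0)"
    by (intro sum.cong) (auto simp: XE)
  finally show ?thesis using jk by simp
qed

lemma averaged_elementary_mat_index:
  assumes "representation G n \<rho>" "representation G m \<sigma>" "j < n" "k < m" "i < n" "l < m"
  shows "mat_sum (\<lambda>h. \<rho> h * elementary_mat n m j k * \<sigma> (inv h)) (carrier G) n m $$ (i,l)
    = (\<Sum>h\<in>carrier G. \<rho> h $$ (i,j) * \<sigma> (inv h) $$ (k,l))"
  using assms by (auto simp: mat_sum_index representation_carrier elementary_mat_sandwich_index intro!: sum.cong)

lemma schur_orthogonality_distinct:
  assumes \<rho>: "irreducible_rep G n \<rho>" and \<sigma>: "irreducible_rep G m \<sigma>"
    and distinct: "\<exists>h\<in>carrier G. mat_trace (\<rho> h) \<noteq> mat_trace (\<sigma> h)"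
    and jk: "j < n" "k < m" and il: "i < n" "l < m"
  shows "(\<Sum>h\<in>carrier G. \<rho> h $$ (i,j) * \<sigma> (inv h) $$ (k,l)) = 0"
proof -
  note reps = irreducible_repD(1)[OF \<rho>] irreducible_repD(1)[OF \<sigma>]
  let ?T = "mat_sum (\<lambda>h. \<rho> h * elementary_mat n m j k * \<sigma> (inv h)) (carrier G) n m"
  have "?T = 0\<^sub>m n m"
  proof (rule ccontr)
    assume "?T \<noteq> 0\<^sub>m n m"
    then have "mat_trace (\<sigma> h) = mat_trace (\<rho> h)" if "h \<in> carrier G" for h
      using irreducible_intertwiner_trace_eq[OF \<rho> \<sigma> mat_sum_carrier _ _ that]
        averaged_intertwiner[OF reps elementary_mat_carrier] by blast
    with distinct show False by auto
  qed
  then show ?thesis using averaged_elementary_mat_index[OF reps jk il] il by simp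
qed

lemma schur_orthogonality_same:
  assumes \<rho>: "irreducible_rep G n \<rho>" and jk: "j < n" "k < n" and il: "i < n" "l < n"
  shows "(\<Sum>h\<in>carrier G. \<rho> h $$ (i,j) * \<rho> (inv h) $$ (k,l))
     = (if i = l \<and> j = k then of_nat (card (carrier G)) / of_nat n else 0)"
proof -
  note rep = irreducible_repD(1)[OF \<rho>] and carr = representation_carrier[OF irreducible_repD(1)[OF \<rho>]]
  let ?E = "elementary_mat n n j k"
  let ?T = "mat_sum (\<lambda>h. \<rho> h * ?E * \<rho> (inv h)) (carrier G) n n"
  obtain c where c: "?T = c \<cdot>\<^sub>m 1\<^sub>m n"
    using schur_scalar[OF \<rho> mat_sum_carrier] averaged_intertwiner[OF rep rep elementary_mat_carrier] by blast
  have "mat_trace (\<rho> h * ?E * \<rho> (inv h)) = mat_trace ?E" if h: "h \<in> carrier G" for h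
  proof -
    have \<rho>h: "\<rho> h \<in> carrier_mat n n" and \<rho>h': "\<rho> (inv h) \<in> carrier_mat n n" using carr h by auto
    have "mat_trace (\<rho> h * ?E * \<rho> (inv h)) = mat_trace (\<rho> h * (?E * \<rho> (inv h)))"
      using assoc_mult_mat[OF \<rho>h elementary_mat_carrier \<rho>h'] by simp
    also have "\<dots> = mat_trace (?E * \<rho> (inv h) * \<rho> h)"
      by (rule mat_trace_mult_comm[OF \<rho>h]) (use mult_carrier_mat[OF elementary_mat_carrier \<rho>h'] in simp)
    also have "?E * \<rho> (inv h) * \<rho> h = ?E"
      using assoc_mult_mat[OF elementary_mat_carrier \<rho>h' \<rho>h] representation_inv_mult[OF rep h]
        right_mult_one_mat[OF elementary_mat_carrier] by simp
    finally show ?thesis .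
  qed
  moreover have "\<rho> h * ?E * \<rho> (inv h) \<in> carrier_mat n n" if "h \<in> carrier G" for h
    using carr that by (metis elementary_mat_carrier inv_closed mult_carrier_mat)
  ultimately have "mat_trace ?T = of_nat (card (carrier G)) * mat_trace ?E"
    by (simp add: mat_trace_mat_sum)
  also have "\<dots> = (if j = k then of_nat (card (carrier G)) else 0)"
    using jk by (simp add: mat_trace_elementary_mat)
  finally have "c * of_nat n = (if j = k then of_nat (card (carrier G)) else 0)"
    using c mat_trace_smult[of "1\<^sub>m n" n c] by simp
  then have "c = (if j = k then of_nat (card (carrier G)) / of_nat n else 0)"
    using irreducible_repD(2)[OF \<rho>] by (auto simp: field_simps split: if_splits)
  then show ?thesis using averaged_elementary_mat_index[OF rep rep jk il] c il by auto
qed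

lemma character_inner_product_eq_coefficient_sum:
  assumes "representation G n \<rho>" "representation G m \<sigma>"
  shows "(\<Sum>h\<in>carrier G. mat_trace (\<rho> h) * mat_trace (\<sigma> (inv h)))
    = (\<Sum>i<n. \<Sum>k<m. \<Sum>h\<in>carrier G. \<rho> h $$ (i,i) * \<sigma> (inv h) $$ (k,k))"
proof -
  have "(\<Sum>h\<in>carrier G. mat_trace (\<rho> h) * mat_trace (\<sigma> (inv h)))
      = (\<Sum>h\<in>carrier G. \<Sum>i<n. \<Sum>k<m. \<rho> h $$ (i,i) * \<sigma> (inv h) $$ (k,k))"
    by (intro sum.cong refl) (simp add: mat_trace_eq_sum[OF representation_carrier[OF assms(1)]]
        mat_trace_eq_sum[OF representation_carrier[OF assms(2)]] sum_product)
  also have "\<dots> = (\<Sum>i<n. \<Sum>h\<in>carrier G. \<Sum>k<m. \<rho> h $$ (i,i) * \<sigma> (inv h) $$ (k,k))"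
    by (rule sum.swap)
  also have "\<dots> = (\<Sum>i<n. \<Sum>k<m. \<Sum>h\<in>carrier G. \<rho> h $$ (i,i) * \<sigma> (inv h) $$ (k,k))"
    by (rule sum.cong[OF refl], rule sum.swap)
  finally show ?thesis .
qed

lemma irreducible_character_norm:
  assumes \<rho>: "irreducible_rep G n \<rho>"
  shows "(\<Sum>h\<in>carrier G. mat_trace (\<rho> h) * mat_trace (\<rho> (inv h))) = of_nat (card (carrier G))"
proof -
  have "(\<Sum>h\<in>carrier G. mat_trace (\<rho> h) * mat_trace (\<rho> (inv h)))
      = (\<Sum>i<n. \<Sum>k<n. if i = k then of_nat (card (carrier G)) / of_nat n else 0)"
    using irreducible_repD(1)[OF \<rho>] schur_orthogonality_same[OF \<rho>]
    by (simp add: character_inner_product_eq_coefficient_sum)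
  then show ?thesis using irreducible_repD(2)[OF \<rho>] by simp
qed

lemma irreducible_characters_orthogonal:
  assumes \<rho>: "irreducible_rep G n \<rho>" and \<sigma>: "irreducible_rep G m \<sigma>"
    and distinct: "\<exists>h\<in>carrier G. mat_trace (\<rho> h) \<noteq> mat_trace (\<sigma> h)"
  shows "(\<Sum>h\<in>carrier G. mat_trace (\<rho> h) * mat_trace (\<sigma> (inv h))) = 0"
  using irreducible_repD(1)[OF \<rho>] irreducible_repD(1)[OF \<sigma>] schur_orthogonality_distinct[OF \<rho> \<sigma> distinct]
  by (simp add: character_inner_product_eq_coefficient_sum)

lemma irr_chars_orthogonal:
  assumes \<chi>: "\<chi> \<in> irr_chars G" and \<psi>: "\<psi> \<in> irr_chars G"
  shows "(\<Sum>h\<in>carrier G. \<chi> h * \<psi> (inv h)) = (if \<chi> = \<psi> then of_nat (card (carrier G)) else 0)"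
proof -
  obtain n \<rho> where \<rho>: "irreducible_rep G n \<rho>" and \<chi>\<rho>: "\<chi> = (\<lambda>x\<in>carrier G. mat_trace (\<rho> x))"
    using \<chi> by (rule irr_charsE)
  obtain m \<sigma> where \<sigma>: "irreducible_rep G m \<sigma>" and \<psi>\<sigma>: "\<psi> = (\<lambda>x\<in>carrier G. mat_trace (\<sigma> x))"
    using \<psi> by (rule irr_charsE)
  show ?thesis
  proof (cases "\<chi> = \<psi>")
    case True
    have "(\<Sum>h\<in>carrier G. \<chi> h * \<psi> (inv h)) = (\<Sum>h\<in>carrier G. mat_trace (\<rho> h) * mat_trace (\<rho> (inv h)))"
      using True \<chi>\<rho> by (intro sum.cong) auto
    then show ?thesis using irreducible_character_norm[OF \<rho>] True by simp
  next
    case False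
    then obtain h where "h \<in> carrier G" "mat_trace (\<rho> h) \<noteq> mat_trace (\<sigma> h)"
      using \<chi>\<rho> \<psi>\<sigma> by (metis restrict_ext)
    then have "(\<Sum>h\<in>carrier G. mat_trace (\<rho> h) * mat_trace (\<sigma> (inv h))) = 0"
      using irreducible_characters_orthogonal[OF \<rho> \<sigma>] by blast
    moreover have "(\<Sum>h\<in>carrier G. \<chi> h * \<psi> (inv h)) = (\<Sum>h\<in>carrier G. mat_trace (\<rho> h) * mat_trace (\<sigma> (inv h)))"
      using \<chi>\<rho> \<psi>\<sigma> by (intro sum.cong) auto
    ultimately show ?thesis using False by simp
  qed
qed


lemma invariant_image_subrepresentation:
  assumes R: "representation G N R" and B: "B \<in> carrier_mat N m" "inj_mat B"
    and invariant: "\<forall>h\<in>carrier G. \<forall>x\<in>carrier_vec m. R h *\<^sub>v (B *\<^sub>v x) \<in> (\<lambda>y. B *\<^sub>v y) ` carrier_vec m"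
  obtains \<rho> where "representation G m \<rho>" "\<forall>h\<in>carrier G. R h * B = B * \<rho> h"
proof -
  define y where "y h j = (SOME y. y \<in> carrier_vec m \<and> R h *\<^sub>v (B *\<^sub>v unit_vec m j) = B *\<^sub>v y)" for h j
  have y: "y h j \<in> carrier_vec m \<and> R h *\<^sub>v (B *\<^sub>v unit_vec m j) = B *\<^sub>v y h j"
    if "h \<in> carrier G" "j < m" for h j
    unfolding y_def by (rule someI_ex) (use invariant that unit_vec_carrier in blast)
  define \<rho> where "\<rho> h = mat_of_cols m (map (y h) [0..<m])" for h
  have \<rho>: "\<rho> h \<in> carrier_mat m m" for h unfolding \<rho>_def by auto
  have inter: "R h * B = B * \<rho> h" if h: "h \<in> carrier G" for h
  proof (rule mat_eqI_mult_unit_vec)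
    have Rh: "R h \<in> carrier_mat N N" using representation_carrier[OF R h] .
    show "R h * B \<in> carrier_mat N m" "B * \<rho> h \<in> carrier_mat N m" using Rh B \<rho> by auto
    fix j assume j: "j < m"
    have "\<rho> h *\<^sub>v unit_vec m j = y h j"
      using y[OF h j] j by (auto simp: \<rho>_def mat_of_cols_def)
    then show "(R h * B) *\<^sub>v unit_vec m j = (B * \<rho> h) *\<^sub>v unit_vec m j"
      using assoc_mult_mat_vec[OF B(1) \<rho> unit_vec_carrier, of h j]
        assoc_mult_mat_vec[OF Rh B(1) unit_vec_carrier, of j] y[OF h j] by simp
  qed
  have "representation G m \<rho>"
    unfolding representation_def
  proof (intro conjI ballI)
    show "\<rho> g \<in> carrier_mat m m" for g by (rule \<rho>)
    have "B * \<rho> \<one> = B * 1\<^sub>m m" using inter[of \<one>] representation_one[OF R] B by simp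
    then show "\<rho> \<one> = 1\<^sub>m m" using inj_mat_cancel_mat[OF B \<rho>] by auto
  next
    fix h k assume h: "h \<in> carrier G" and k: "k \<in> carrier G"
    have Rh: "R h \<in> carrier_mat N N" and Rk: "R k \<in> carrier_mat N N"
      using representation_carrier[OF R] h k by auto
    have "B * \<rho> (h \<otimes> k) = R (h \<otimes> k) * B" using inter h k by auto
    also have "\<dots> = R h * (R k * B)"
      unfolding representation_mult[OF R h k] by (rule assoc_mult_mat[OF Rh Rk B(1)])
    also have "\<dots> = (R h * B) * \<rho> k" using inter k assoc_mult_mat[OF Rh B(1) \<rho>] by auto
    also have "\<dots> = B * (\<rho> h * \<rho> k)" using inter h assoc_mult_mat[OF B(1) \<rho> \<rho>] by auto
    finally show "\<rho> (h \<otimes> k) = \<rho> h * \<rho> k"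
      using inj_mat_cancel_mat[OF B \<rho> mult_carrier_mat[OF \<rho> \<rho>]] by blast
  qed
  with inter that show ?thesis by blast
qed

lemma intertwiner_mult_invariant_image:
  assumes R: "representation G N R" and \<rho>: "representation G m \<rho>" and B: "B \<in> carrier_mat N m"
    and inter: "\<forall>h\<in>carrier G. R h * B = B * \<rho> h" and C: "C \<in> carrier_mat m k"
    and invariant: "\<forall>h\<in>carrier G. \<forall>x\<in>carrier_vec k. \<rho> h *\<^sub>v (C *\<^sub>v x) \<in> (\<lambda>y. C *\<^sub>v y) ` carrier_vec k"
    and h: "h \<in> carrier G" and x: "x \<in> carrier_vec k"
  shows "R h *\<^sub>v ((B * C) *\<^sub>v x) \<in> (\<lambda>y. (B * C) *\<^sub>v y) ` carrier_vec k"
proof -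
  obtain y where y: "y \<in> carrier_vec k" "\<rho> h *\<^sub>v (C *\<^sub>v x) = C *\<^sub>v y" using invariant h x by blast
  have "R h *\<^sub>v ((B * C) *\<^sub>v x) = B *\<^sub>v (\<rho> h *\<^sub>v (C *\<^sub>v x))"
    using mult_mat_vec_intertwine[OF representation_carrier[OF R h] B representation_carrier[OF \<rho> h] _
        mult_mat_vec_carrier[OF C x]] inter h B C x by simp
  also have "\<dots> = (B * C) *\<^sub>v y" using y B C by simp
  finally show ?thesis using y(1) by blast
qed

text \<open>A subrepresentation of minimal dimension inside \<open>E\<close> is irreducible.\<close>

lemma invariant_subspace_irreducible_subrep:
  assumes R: "representation G N R" and E: "subspace_vec N E" "E \<noteq> {0\<^sub>v N}"
    and invariant: "\<forall>h\<in>carrier G. \<forall>x\<in>E. R h *\<^sub>v x \<in> E"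
  obtains m B \<rho> where "B \<in> carrier_mat N m" "inj_mat B" "0 < m" "\<forall>x\<in>carrier_vec m. B *\<^sub>v x \<in> E"
    "irreducible_rep G m \<rho>" "\<forall>h\<in>carrier G. R h * B = B * \<rho> h"
proof -
  define P where "P m \<longleftrightarrow> (\<exists>B. B \<in> carrier_mat N m \<and> inj_mat B \<and> 0 < m \<and> (\<forall>x\<in>carrier_vec m. B *\<^sub>v x \<in> E)
     \<and> (\<forall>h\<in>carrier G. \<forall>x\<in>carrier_vec m. R h *\<^sub>v (B *\<^sub>v x) \<in> (\<lambda>y. B *\<^sub>v y) ` carrier_vec m))" for m
  obtain C k where C: "C \<in> carrier_mat N k" "inj_mat C" and im: "(\<lambda>x. C *\<^sub>v x) ` carrier_vec k = E"
    and "E \<noteq> {0\<^sub>v N} \<longrightarrow> 0 < k" "E \<noteq> carrier_vec N \<longrightarrow> k < N"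
    by (rule subspace_vec_basis[OF E(1)])
  with E(2) have "P k" unfolding P_def using invariant by (intro exI[of _ C]) auto
  define m where "m = (LEAST m. P m)"
  have "P m" unfolding m_def by (rule LeastI) fact
  then obtain B where B: "B \<in> carrier_mat N m" "inj_mat B" "0 < m" "\<forall>x\<in>carrier_vec m. B *\<^sub>v x \<in> E"
    and B_invariant: "\<forall>h\<in>carrier G. \<forall>x\<in>carrier_vec m. R h *\<^sub>v (B *\<^sub>v x) \<in> (\<lambda>y. B *\<^sub>v y) ` carrier_vec m"
    unfolding P_def by blast
  obtain \<rho> where \<rho>: "representation G m \<rho>" and inter: "\<forall>h\<in>carrier G. R h * B = B * \<rho> h"
    using invariant_image_subrepresentation[OF R B(1,2) B_invariant] .
  have "irreducible_rep G m \<rho>"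
    unfolding irreducible_rep_def
  proof (intro conjI \<rho> B(3) notI)
    assume "\<exists>W. subspace_vec m W \<and> W \<noteq> {0\<^sub>v m} \<and> W \<noteq> carrier_vec m \<and> (\<forall>h\<in>carrier G. \<forall>w\<in>W. \<rho> h *\<^sub>v w \<in> W)"
    then obtain W where W: "subspace_vec m W" "W \<noteq> {0\<^sub>v m}" "W \<noteq> carrier_vec m"
      and W_invariant: "\<forall>h\<in>carrier G. \<forall>w\<in>W. \<rho> h *\<^sub>v w \<in> W" by blast
    obtain C k where C: "C \<in> carrier_mat m k" "inj_mat C" "(\<lambda>x. C *\<^sub>v x) ` carrier_vec k = W"
      and "W \<noteq> {0\<^sub>v m} \<longrightarrow> 0 < k" "W \<noteq> carrier_vec m \<longrightarrow> k < m"
      by (rule subspace_vec_basis[OF W(1)])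
    with W(2,3) have k: "0 < k" "k < m" by auto
    have "\<forall>h\<in>carrier G. \<forall>x\<in>carrier_vec k. \<rho> h *\<^sub>v (C *\<^sub>v x) \<in> (\<lambda>y. C *\<^sub>v y) ` carrier_vec k"
      using W_invariant C(3) by blast
    then have "P k" unfolding P_def
      using intertwiner_mult_invariant_image[OF R \<rho> B(1) inter C(1)] inj_mat_mult[OF B(1,2) C(1,2)] B(1,4) C(1) k(1)
      by (intro exI[of _ "B * C"]) simp
    then have "m \<le> k" unfolding m_def by (rule Least_le)
    with k(2) show False by simp
  qed
  with B inter that show ?thesis by blast
qed

subsection \<open>Class functions and completeness of the irreducible characters\<close>

definition class_function :: "('a \<Rightarrow> complex) \<Rightarrow> bool" where
  "class_function f \<longleftrightarrow> (\<forall>k\<in>carrier G. \<forall>u\<in>carrier G. f (k \<otimes> u \<otimes> inv k) = f u)"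

lemma conj_bij_betw: "k \<in> carrier G \<Longrightarrow> bij_betw (\<lambda>u. k \<otimes> u \<otimes> inv k) (carrier G) (carrier G)"
  by (rule bij_betw_byWitness[where f' = "\<lambda>u. inv k \<otimes> u \<otimes> k"])
    (auto simp: m_assoc inv_mult_cancel_left mult_inv_cancel_left)

lemma mat_trace_representation_conj:
  assumes rep: "representation G n \<rho>" and k: "k \<in> carrier G" and u: "u \<in> carrier G"
  shows "mat_trace (\<rho> (k \<otimes> u \<otimes> inv k)) = mat_trace (\<rho> u)"
proof -
  have \<rho>k: "\<rho> k \<in> carrier_mat n n" and \<rho>u: "\<rho> u \<in> carrier_mat n n" and \<rho>k': "\<rho> (inv k) \<in> carrier_mat n n"
    using representation_carrier[OF rep] k u by auto
  have "mat_trace (\<rho> (k \<otimes> u \<otimes> inv k)) = mat_trace (\<rho> k * (\<rho> u * \<rho> (inv k)))"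
    using representation_mult[OF rep] k u \<rho>k \<rho>u \<rho>k' by simp
  also have "\<dots> = mat_trace (\<rho> u * \<rho> (inv k) * \<rho> k)"
    by (rule mat_trace_mult_comm[OF \<rho>k]) (use \<rho>u \<rho>k' in simp)
  also have "\<dots> = mat_trace (\<rho> u)"
    using representation_inv_mult[OF rep k] \<rho>u \<rho>k \<rho>k' by simp
  finally show ?thesis .
qed

lemma irr_chars_class_function:
  assumes "\<chi> \<in> irr_chars G"
  shows "class_function \<chi>"
  using assms
proof (rule irr_charsE)
  fix n \<rho> assume "irreducible_rep G n \<rho>" and "\<chi> = (\<lambda>x\<in>carrier G. mat_trace (\<rho> x))"
  then show "class_function \<chi>"
    unfolding class_function_def
    using mat_trace_representation_conj[OF irreducible_repD(1)[OF \<open>irreducible_rep G n \<rho>\<close>]] by simp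
qed

text \<open>\<open>\<rho>(f) = \<Sum>\<^sub>h f(h) \<rho>(h)\<close>, the action of \<open>f\<close> viewed as an element of the group algebra.\<close>

definition fourier_mat :: "('a \<Rightarrow> complex mat) \<Rightarrow> nat \<Rightarrow> ('a \<Rightarrow> complex) \<Rightarrow> complex mat" where
  "fourier_mat \<rho> n f = mat_sum (\<lambda>h. f h \<cdot>\<^sub>m \<rho> h) (carrier G) n n"

lemma fourier_mat_carrier [simp]: "fourier_mat \<rho> n f \<in> carrier_mat n n"
  and fourier_mat_dim [simp]: "dim_row (fourier_mat \<rho> n f) = n" "dim_col (fourier_mat \<rho> n f) = n"
  unfolding fourier_mat_def by simp_all

lemma fourier_mat_commute:
  assumes rep: "representation G n \<rho>" and f: "class_function f" and k: "k \<in> carrier G"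
  shows "\<rho> k * fourier_mat \<rho> n f = fourier_mat \<rho> n f * \<rho> k"
proof -
  note carr = representation_carrier[OF rep]
  have "\<rho> k * fourier_mat \<rho> n f = mat_sum (\<lambda>h. \<rho> k * (f h \<cdot>\<^sub>m \<rho> h)) (carrier G) n n"
    unfolding fourier_mat_def using carr by (intro mult_mat_sum[OF carr[OF k]]) auto
  also have "\<dots> = mat_sum (\<lambda>h. f h \<cdot>\<^sub>m \<rho> (k \<otimes> h)) (carrier G) n n"
    using mult_smult_distrib[OF carr[OF k] carr] representation_mult[OF rep k] by (intro mat_sum_cong) simp
  also have "\<dots> = mat_sum (\<lambda>u. f (k \<otimes> u \<otimes> inv k) \<cdot>\<^sub>m \<rho> ((k \<otimes> u \<otimes> inv k) \<otimes> k)) (carrier G) n n"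
    using f k by (intro mat_sum_cong) (auto simp: class_function_def m_assoc)
  also have "\<dots> = mat_sum (\<lambda>h. f h \<cdot>\<^sub>m \<rho> (h \<otimes> k)) (carrier G) n n"
    by (rule mat_sum_reindex_bij_betw[OF conj_bij_betw[OF k]])
  also have "\<dots> = mat_sum (\<lambda>h. (f h \<cdot>\<^sub>m \<rho> h) * \<rho> k) (carrier G) n n"
    using mult_smult_assoc_mat[OF carr carr[OF k]] representation_mult[OF rep _ k] by (intro mat_sum_cong) simp
  also have "\<dots> = fourier_mat \<rho> n f * \<rho> k"
    unfolding fourier_mat_def using carr by (intro mat_sum_mult[OF carr[OF k], symmetric]) auto
  finally show ?thesis .
qed

lemma fourier_mat_intertwine:
  assumes R: "representation G N R" and \<rho>: "representation G m \<rho>" and B: "B \<in> carrier_mat N m"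
    and inter: "\<forall>h\<in>carrier G. R h * B = B * \<rho> h"
  shows "fourier_mat R N f * B = B * fourier_mat \<rho> m f"
proof -
  note carr = representation_carrier[OF R] representation_carrier[OF \<rho>]
  have "fourier_mat R N f * B = mat_sum (\<lambda>h. (f h \<cdot>\<^sub>m R h) * B) (carrier G) N m"
    unfolding fourier_mat_def using carr by (intro mat_sum_mult[OF B]) auto
  also have "\<dots> = mat_sum (\<lambda>h. B * (f h \<cdot>\<^sub>m \<rho> h)) (carrier G) N m"
    using mult_smult_assoc_mat[OF carr(1) B] mult_smult_distrib[OF B carr(2)] inter by (intro mat_sum_cong) simp
  also have "\<dots> = B * fourier_mat \<rho> m f"
    unfolding fourier_mat_def using carr by (intro mult_mat_sum[OF B, symmetric]) auto
  finally show ?thesis .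
qed

lemma mat_trace_fourier_mat:
  "representation G n \<rho> \<Longrightarrow> mat_trace (fourier_mat \<rho> n f) = (\<Sum>h\<in>carrier G. f h * mat_trace (\<rho> h))"
  unfolding fourier_mat_def
  by (simp add: mat_trace_mat_sum representation_carrier mat_trace_smult[OF representation_carrier] cong: sum.cong)

lemma fourier_mat_irreducible_eq_zero:
  assumes \<rho>: "irreducible_rep G m \<rho>" and f: "class_function f"
    and orthogonal: "(\<Sum>h\<in>carrier G. f h * mat_trace (\<rho> h)) = 0"
  shows "fourier_mat \<rho> m f = 0\<^sub>m m m"
proof -
  note rep = irreducible_repD(1)[OF \<rho>]
  obtain c where c: "fourier_mat \<rho> m f = c \<cdot>\<^sub>m 1\<^sub>m m"
    using schur_scalar[OF \<rho> fourier_mat_carrier] fourier_mat_commute[OF rep f] by blast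
  have "c * of_nat m = 0"
    using mat_trace_fourier_mat[OF rep, of f] orthogonal c mat_trace_smult[of "1\<^sub>m m" m c] by simp
  then show ?thesis using c irreducible_repD(2)[OF \<rho>] by auto
qed

definition carrier_enum :: "nat \<Rightarrow> 'a" where
  "carrier_enum = (SOME e. bij_betw e {..<card (carrier G)} (carrier G))"

lemma carrier_enum_bij_betw: "bij_betw carrier_enum {..<card (carrier G)} (carrier G)"
proof -
  have "\<exists>e. bij_betw e {..<card (carrier G)} (carrier G)"
    using ex_bij_betw_nat_finite[OF finite_carrier] by (auto simp: atLeast0LessThan)
  then show ?thesis unfolding carrier_enum_def by (rule someI_ex)
qed

lemma carrier_enum_carrier: "i < card (carrier G) \<Longrightarrow> carrier_enum i \<in> carrier G"
  and carrier_enum_inj: "i < card (carrier G) \<Longrightarrow> j < card (carrier G) \<Longrightarrow> carrier_enum i = carrier_enum j \<longleftrightarrow> i = j"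
  using carrier_enum_bij_betw unfolding bij_betw_def inj_on_def by auto

lemma carrier_enum_surj: "x \<in> carrier G \<Longrightarrow> \<exists>i < card (carrier G). carrier_enum i = x"
  using carrier_enum_bij_betw unfolding bij_betw_def by (metis imageE lessThan_iff)

lemma sum_carrier_enum: "(\<Sum>l<card (carrier G). F (carrier_enum l)) = (\<Sum>x\<in>carrier G. F x)"
  by (rule sum.reindex_bij_betw[OF carrier_enum_bij_betw])

definition regular_rep :: "'a \<Rightarrow> complex mat" where
  "regular_rep h = mat (card (carrier G)) (card (carrier G))
     (\<lambda>(i,j). if carrier_enum i = h \<otimes> carrier_enum j then 1 else 0)"

lemma regular_rep_carrier: "regular_rep h \<in> carrier_mat (card (carrier G)) (card (carrier G))"
  unfolding regular_rep_def by simp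

lemma regular_rep_representation: "representation G (card (carrier G)) regular_rep"
  unfolding representation_def
proof (intro conjI ballI)
  let ?N = "card (carrier G)" and ?e = carrier_enum
  show "regular_rep g \<in> carrier_mat ?N ?N" for g by (rule regular_rep_carrier)
  show "regular_rep \<one> = 1\<^sub>m ?N"
    unfolding regular_rep_def by (rule eq_matI) (auto simp: carrier_enum_carrier carrier_enum_inj)
  fix h k assume h: "h \<in> carrier G" and k: "k \<in> carrier G"
  show "regular_rep (h \<otimes> k) = regular_rep h * regular_rep k"
  proof (rule eq_matI)
    fix i j assume "i < dim_row (regular_rep h * regular_rep k)" "j < dim_col (regular_rep h * regular_rep k)"
    then have i: "i < ?N" and j: "j < ?N" unfolding regular_rep_def by auto
    have "(regular_rep h * regular_rep k) $$ (i,j) = (\<Sum>l<?N. regular_rep h $$ (i,l) * regular_rep k $$ (l,j))"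
      by (rule mat_mult_index_sum[OF regular_rep_carrier regular_rep_carrier i j])
    also have "\<dots> = (\<Sum>l<?N. (if ?e i = h \<otimes> ?e l then 1 else 0) * (if ?e l = k \<otimes> ?e j then 1 else 0))"
      using i j by (intro sum.cong) (auto simp: regular_rep_def)
    also have "\<dots> = (\<Sum>x\<in>carrier G. (if ?e i = h \<otimes> x then 1 else 0) * (if x = k \<otimes> ?e j then 1 else 0))"
      by (rule sum_carrier_enum)
    also have "\<dots> = (if ?e i = h \<otimes> (k \<otimes> ?e j) then 1 else 0)"
      using k carrier_enum_carrier[OF j] by (simp add: if_distrib[of "(*) _"] sum.delta[OF finite_carrier] cong: if_cong)
    finally show "regular_rep (h \<otimes> k) $$ (i,j) = (regular_rep h * regular_rep k) $$ (i,j)"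
      using i j h k carrier_enum_carrier[OF j] by (simp add: regular_rep_def m_assoc)
  qed (auto simp: regular_rep_def)
qed

lemma fourier_mat_regular_rep_index:
  assumes i: "i < card (carrier G)" and j: "j < card (carrier G)"
  shows "fourier_mat regular_rep (card (carrier G)) f $$ (i,j) = f (carrier_enum i \<otimes> inv (carrier_enum j))"
proof -
  have ei: "carrier_enum i \<in> carrier G" and ej: "carrier_enum j \<in> carrier G" using carrier_enum_carrier i j by auto
  have "fourier_mat regular_rep (card (carrier G)) f $$ (i,j)
      = (\<Sum>h\<in>carrier G. if h = carrier_enum i \<otimes> inv (carrier_enum j) then f h else 0)"
    unfolding fourier_mat_def using i j ei ej
    by (auto simp: mat_sum_index regular_rep_def inv_solve_right intro!: sum.cong)
  then show ?thesis using ei ej by (simp add: sum.delta[OF finite_carrier])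
qed

lemma mat_adjoint_fourier_mat_regular_rep:
  "mat_adjoint (fourier_mat regular_rep (card (carrier G)) f)
     = fourier_mat regular_rep (card (carrier G)) (\<lambda>h. cnj (f (inv h)))"
  by (rule eq_matI) (auto simp: fourier_mat_regular_rep_index carrier_enum_carrier inv_mult_group)

text \<open>Each eigenspace is \<open>R\<close>-invariant and so contains an irreducible subrepresentation.\<close>

lemma eigenvalue_eq_zero_if_vanishes_on_irreducible_subreps:
  assumes R: "representation G N R" and P: "P \<in> carrier_mat N N"
    and comm: "\<forall>h\<in>carrier G. R h * P = P * R h"
    and vanish: "\<And>m B \<rho>. B \<in> carrier_mat N m \<Longrightarrow> irreducible_rep G m \<rho> \<Longrightarrow>
      \<forall>h\<in>carrier G. R h * B = B * \<rho> h \<Longrightarrow> P * B = 0\<^sub>m N m"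
    and ev: "eigenvalue P c"
  shows "c = 0"
proof -
  define E where "E = {v \<in> carrier_vec N. P *\<^sub>v v = c \<cdot>\<^sub>v v}"
  have "\<forall>h\<in>carrier G. \<forall>w\<in>E. R h *\<^sub>v w \<in> E"
  proof (intro ballI)
    fix h w assume h: "h \<in> carrier G" and w: "w \<in> E"
    have Rh: "R h \<in> carrier_mat N N" using representation_carrier[OF R h] .
    have "P *\<^sub>v (R h *\<^sub>v w) = R h *\<^sub>v (c \<cdot>\<^sub>v w)"
      using mult_mat_vec_intertwine[OF P Rh P] comm h w by (simp add: E_def)
    then show "R h *\<^sub>v w \<in> E" using Rh w by (simp add: E_def mult_mat_vec)
  qed
  moreover have "E \<noteq> {0\<^sub>v N}"
  proof -
    obtain v where "v \<in> carrier_vec N" "v \<noteq> 0\<^sub>v N" "P *\<^sub>v v = c \<cdot>\<^sub>v v"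
      using ev P unfolding eigenvalue_def eigenvector_def by auto
    then show ?thesis unfolding E_def by blast
  qed
  ultimately obtain m B \<rho> where B: "B \<in> carrier_mat N m" "inj_mat B" "0 < m" "\<forall>x\<in>carrier_vec m. B *\<^sub>v x \<in> E"
    and \<rho>: "irreducible_rep G m \<rho>" and inter: "\<forall>h\<in>carrier G. R h * B = B * \<rho> h"
    using invariant_subspace_irreducible_subrep[OF R subspace_vec_eigenspace[OF P, of c, folded E_def]]
    by metis
  let ?u = "unit_vec m 0 :: complex vec"
  have "?u \<noteq> 0\<^sub>v m"
  proof
    assume "?u = 0\<^sub>v m"
    then have "?u $ 0 = 0\<^sub>v m $ 0" by simp
    then show False using B(3) by simp
  qed
  then have Bu: "B *\<^sub>v ?u \<noteq> 0\<^sub>v N" using inj_matD[OF B(2,1) unit_vec_carrier] by blast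
  have "c \<cdot>\<^sub>v (B *\<^sub>v ?u) = P *\<^sub>v (B *\<^sub>v ?u)" using B(4) by (simp add: E_def)
  also have "\<dots> = (P * B) *\<^sub>v ?u" by (rule assoc_mult_mat_vec[symmetric, OF P B(1) unit_vec_carrier])
  also have "\<dots> = 0\<^sub>v N" using vanish[OF B(1) \<rho> inter] by simp
  finally show "c = 0" by (rule smult_vec_eq_zero_imp[OF _ mult_mat_vec_carrier[OF B(1) unit_vec_carrier] Bu])
qed

text \<open>\<open>T = R(f)\<close> kills every irreducible subrepresentation of the regular representation \<open>R\<close>,
  hence the hermitian matrix \<open>T\<^sup>H T\<close> is nilpotent and so zero.\<close>

lemma fourier_mat_regular_rep_eq_zero:
  assumes f: "class_function f" and orthogonal: "\<forall>\<chi>\<in>irr_chars G. (\<Sum>h\<in>carrier G. f h * \<chi> h) = 0"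
  shows "fourier_mat regular_rep (card (carrier G)) f = 0\<^sub>m (card (carrier G)) (card (carrier G))"
proof -
  let ?N = "card (carrier G)" and ?R = regular_rep
  note R = regular_rep_representation
  define T where "T = fourier_mat ?R ?N f"
  define P where "P = mat_adjoint T * T"
  have T: "T \<in> carrier_mat ?N ?N" unfolding T_def by simp
  then have P: "P \<in> carrier_mat ?N ?N" unfolding P_def by (metis mat_adjoint_carrier mult_carrier_mat)
  have "class_function (\<lambda>h. cnj (f (inv h)))"
    using f unfolding class_function_def by (auto simp: inv_mult_group m_assoc)
  then have "?R h * mat_adjoint T = mat_adjoint T * ?R h" if "h \<in> carrier G" for h
    unfolding T_def mat_adjoint_fourier_mat_regular_rep by (rule fourier_mat_commute[OF R _ that])
  moreover have "?R h * T = T * ?R h" if "h \<in> carrier G" for h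
    unfolding T_def by (rule fourier_mat_commute[OF R f that])
  ultimately have "\<forall>h\<in>carrier G. ?R h * P = P * ?R h"
    unfolding P_def using mult_commute_mult[OF regular_rep_carrier mat_adjoint_carrier[OF T] T] by blast
  moreover have "P * B = 0\<^sub>m ?N m"
    if B: "B \<in> carrier_mat ?N m" and \<rho>: "irreducible_rep G m \<rho>" and inter: "\<forall>h\<in>carrier G. ?R h * B = B * \<rho> h"
    for m B \<rho>
  proof -
    have "(\<lambda>x\<in>carrier G. mat_trace (\<rho> x)) \<in> irr_chars G" using \<rho> unfolding irr_chars_def by blast
    then have "(\<Sum>h\<in>carrier G. f h * (\<lambda>x\<in>carrier G. mat_trace (\<rho> x)) h) = 0" using orthogonal by blast
    then have "(\<Sum>h\<in>carrier G. f h * mat_trace (\<rho> h)) = 0" by (metis (no_types, lifting) restrict_apply' sum.cong)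
    then have "T * B = 0\<^sub>m ?N m"
      unfolding T_def fourier_mat_intertwine[OF R irreducible_repD(1)[OF \<rho>] B inter]
      using fourier_mat_irreducible_eq_zero[OF \<rho> f] B by simp
    then show ?thesis unfolding P_def assoc_mult_mat[OF mat_adjoint_carrier[OF T] T B] using T by simp
  qed
  ultimately have "P ^\<^sub>m ?N = 0\<^sub>m ?N ?N"
    using pow_mat_dim_eq_zero_if_eigenvalues_zero[OF P] eigenvalue_eq_zero_if_vanishes_on_irreducible_subreps[OF R P]
    by blast
  moreover have "mat_adjoint P = P" unfolding P_def using mat_adjoint_mult[OF mat_adjoint_carrier[OF T] T] by simp
  ultimately have "mat_adjoint T * T = 0\<^sub>m ?N ?N" using hermitian_nilpotent_eq_zero[OF P] unfolding P_def by blast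
  then show ?thesis unfolding T_def[symmetric] by (rule mat_adjoint_mult_self_eq_zero[OF T])
qed

theorem class_function_eq_zero_if_orthogonal_to_irr_chars:
  assumes f: "class_function f" and orthogonal: "\<forall>\<chi>\<in>irr_chars G. (\<Sum>h\<in>carrier G. f h * \<chi> h) = 0"
    and x: "x \<in> carrier G"
  shows "f x = 0"
proof -
  obtain i j where i: "i < card (carrier G)" "carrier_enum i = x"
    and j: "j < card (carrier G)" "carrier_enum j = \<one>"
    using carrier_enum_surj x one_closed by metis
  then have "fourier_mat regular_rep (card (carrier G)) f $$ (i,j) = f x"
    using fourier_mat_regular_rep_index x by simp
  then show ?thesis using fourier_mat_regular_rep_eq_zero[OF f orthogonal] i j by simp
qed

lemma irr_chars_linear_independent:
  fixes K :: nat
  assumes s: "\<And>j. j < K \<Longrightarrow> s j \<in> irr_chars G" "inj_on s {..<K}"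
    and zero: "\<And>h. h \<in> carrier G \<Longrightarrow> (\<Sum>j<K. a j * s j h) = 0" and l: "l < K"
  shows "a l = 0"
proof -
  have "0 = (\<Sum>h\<in>carrier G. (\<Sum>j<K. a j * s j h) * s l (inv h))" using zero by simp
  also have "\<dots> = (\<Sum>h\<in>carrier G. \<Sum>j<K. a j * (s j h * s l (inv h)))"
    by (simp add: sum_distrib_right mult.assoc)
  also have "\<dots> = (\<Sum>j<K. a j * (\<Sum>h\<in>carrier G. s j h * s l (inv h)))"
    by (subst sum.swap) (simp add: sum_distrib_left)
  also have "\<dots> = (\<Sum>j<K. a j * (if j = l then of_nat (card (carrier G)) else 0))"
    using s l by (intro sum.cong refl) (simp add: irr_chars_orthogonal inj_on_eq_iff)
  also have "\<dots> = a l * of_nat (card (carrier G))" using l by (simp add: if_distrib cong: if_cong)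
  finally show ?thesis using card_carrier_pos by simp
qed

text \<open>More than \<open>|G|\<close> linearly independent functions on \<open>G\<close> would give an injective
  \<open>|G| \<times> (|G| + 1)\<close> matrix.\<close>

lemma irr_chars_finite: "finite (irr_chars G)"
proof (rule ccontr)
  let ?N = "card (carrier G)"
  assume "infinite (irr_chars G)"
  then obtain S where S: "finite S" "card S = Suc ?N" "S \<subseteq> irr_chars G"
    using infinite_arbitrarily_large by blast
  obtain s where "bij_betw s {..<Suc ?N} S"
    using ex_bij_betw_nat_finite[OF S(1)] S(2) by (auto simp: atLeast0LessThan)
  then have s: "\<And>j. j < Suc ?N \<Longrightarrow> s j \<in> irr_chars G" "inj_on s {..<Suc ?N}"
    using S(3) unfolding bij_betw_def by auto
  define M where "M = mat ?N (Suc ?N) (\<lambda>(i,j). s j (carrier_enum i))"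
  have M: "M \<in> carrier_mat ?N (Suc ?N)" unfolding M_def by auto
  have "inj_mat M"
  proof (rule inj_matI[OF M])
    fix x :: "complex vec" assume x: "x \<in> carrier_vec (Suc ?N)" and Mx: "M *\<^sub>v x = 0\<^sub>v ?N"
    have "(\<Sum>j<Suc ?N. x $ j * s j h) = 0" if h: "h \<in> carrier G" for h
    proof -
      obtain i where i: "i < ?N" "carrier_enum i = h" using carrier_enum_surj[OF h] by auto
      have "(M *\<^sub>v x) $ i = (\<Sum>j<Suc ?N. x $ j * s j h)"
        using M x i by (auto simp: M_def scalar_prod_def atLeast0LessThan mult.commute intro!: sum.cong)
      then show ?thesis using Mx i by simp
    qed
    then show "x = 0\<^sub>v (Suc ?N)"
      using irr_chars_linear_independent[OF s] x by (intro eq_vecI) auto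
  qed
  with inj_mat_dim_le[OF M] show False by simp
qed

theorem class_function_expansion:
  assumes f: "class_function f" and x: "x \<in> carrier G"
  shows "f x = (\<Sum>\<chi>\<in>irr_chars G. (\<Sum>h\<in>carrier G. f h * \<chi> (inv h)) * \<chi> x) / of_nat (card (carrier G))"
proof -
  let ?X = "irr_chars G" and ?N = "card (carrier G)"
  define c where "c \<chi> = (\<Sum>h\<in>carrier G. f h * \<chi> (inv h))" for \<chi>
  define g where "g y = f y - (\<Sum>\<chi>\<in>?X. c \<chi> * \<chi> y) / of_nat ?N" for y
  have "class_function g"
    using f irr_chars_class_function unfolding g_def class_function_def by (auto intro!: sum.cong)
  then have g_inv: "class_function (\<lambda>y. g (inv y))"
    unfolding class_function_def by (auto simp: inv_mult_group m_assoc)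
  have "(\<Sum>h\<in>carrier G. g (inv h) * \<psi> h) = 0" if \<psi>: "\<psi> \<in> ?X" for \<psi>
  proof -
    have "(\<Sum>h\<in>carrier G. g (inv h) * \<psi> h) = (\<Sum>h\<in>carrier G. g h * \<psi> (inv h))"
      using sum.reindex_bij_betw[OF inv_bij_betw, of "\<lambda>h. g h * \<psi> (inv h)"] by simp
    also have "\<dots> = c \<psi> - (\<Sum>h\<in>carrier G. \<Sum>\<chi>\<in>?X. c \<chi> * (\<chi> h * \<psi> (inv h))) / of_nat ?N"
      by (simp add: g_def c_def left_diff_distrib sum_subtractf sum_divide_distrib sum_distrib_right mult.assoc)
    also have "(\<Sum>h\<in>carrier G. \<Sum>\<chi>\<in>?X. c \<chi> * (\<chi> h * \<psi> (inv h))) = (\<Sum>\<chi>\<in>?X. c \<chi> * (\<Sum>h\<in>carrier G. \<chi> h * \<psi> (inv h)))"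
      by (subst sum.swap) (simp add: sum_distrib_left)
    also have "\<dots> = c \<psi> * of_nat ?N"
      using \<psi> irr_chars_finite by (simp add: irr_chars_orthogonal if_distrib cong: if_cong)
    finally show ?thesis using card_carrier_pos by simp
  qed
  then have "g (inv (inv x)) = 0"
    using class_function_eq_zero_if_orthogonal_to_irr_chars[OF g_inv] x by blast
  then show ?thesis using x by (simp add: g_def c_def)
qed


subsection \<open>Products of two elements of a real conjugacy class\<close>

definition conj_class :: "'a \<Rightarrow> 'a set" where
  "conj_class c = {k \<otimes> c \<otimes> inv k | k. k \<in> carrier G}"

lemma conj_class_subset: "c \<in> carrier G \<Longrightarrow> conj_class c \<subseteq> carrier G"
  unfolding conj_class_def by auto

lemma conj_class_self: "c \<in> carrier G \<Longrightarrow> c \<in> conj_class c"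
  unfolding conj_class_def by (auto intro!: exI[of _ \<one>])

lemma conj_class_conj:
  assumes c: "c \<in> carrier G" and a: "a \<in> conj_class c" and k: "k \<in> carrier G"
  shows "k \<otimes> a \<otimes> inv k \<in> conj_class c"
proof -
  obtain l where l: "l \<in> carrier G" "a = l \<otimes> c \<otimes> inv l" using a unfolding conj_class_def by blast
  then have "k \<otimes> a \<otimes> inv k = (k \<otimes> l) \<otimes> c \<otimes> inv (k \<otimes> l)"
    using c k by (simp add: m_assoc inv_mult_group)
  then show ?thesis using k l(1) unfolding conj_class_def by blast
qed

lemma conj_class_conj_bij_betw:
  assumes "c \<in> carrier G" "k \<in> carrier G"
  shows "bij_betw (\<lambda>a. k \<otimes> a \<otimes> inv k) (conj_class c) (conj_class c)"
proof (rule bij_betw_byWitness[where f' = "\<lambda>a. inv k \<otimes> a \<otimes> k"])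
  show "(\<lambda>a. k \<otimes> a \<otimes> inv k) ` conj_class c \<subseteq> conj_class c"
    using assms conj_class_conj by blast
  show "(\<lambda>a. inv k \<otimes> a \<otimes> k) ` conj_class c \<subseteq> conj_class c"
    using assms conj_class_conj[of c _ "inv k"] by auto
qed (use assms subsetD[OF conj_class_subset[OF assms(1)]] in
    \<open>auto simp: m_assoc inv_mult_cancel_left mult_inv_cancel_left\<close>)

lemma conj_class_inv:
  assumes c: "c \<in> carrier G" and inv_c: "inv c \<in> conj_class c" and a: "a \<in> conj_class c"
  shows "inv a \<in> conj_class c"
proof -
  obtain k where k: "k \<in> carrier G" "a = k \<otimes> c \<otimes> inv k" using a unfolding conj_class_def by blast
  then have "inv a = k \<otimes> inv c \<otimes> inv k" using c by (simp add: inv_mult_group m_assoc)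
  then show ?thesis using conj_class_conj[OF c inv_c k(1)] by simp
qed

lemma conj_class_product_mem_iff:
  assumes c: "c \<in> carrier G"
  shows "(\<exists>a\<in>conj_class c. \<exists>b\<in>conj_class c. a \<otimes> b \<in> conj_class c)
    \<longleftrightarrow> (\<exists>a\<in>conj_class c. \<exists>b\<in>conj_class c. a \<otimes> b = c)"
proof
  assume "\<exists>a\<in>conj_class c. \<exists>b\<in>conj_class c. a \<otimes> b \<in> conj_class c"
  then obtain a b k where ab: "a \<in> conj_class c" "b \<in> conj_class c" and k: "k \<in> carrier G"
    and prod: "a \<otimes> b = k \<otimes> c \<otimes> inv k"
    unfolding conj_class_def by blast
  have "a \<in> carrier G" "b \<in> carrier G" using ab conj_class_subset[OF c] by auto
  then have "inv k \<otimes> a \<otimes> k \<otimes> (inv k \<otimes> b \<otimes> k) = inv k \<otimes> (a \<otimes> b) \<otimes> k"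
    using k by (simp add: m_assoc mult_inv_cancel_left)
  also have "\<dots> = c" using prod c k by (simp add: m_assoc inv_mult_cancel_left)
  finally show "\<exists>a\<in>conj_class c. \<exists>b\<in>conj_class c. a \<otimes> b = c"
    using ab k conj_class_conj[OF c _ inv_closed[OF k]] by auto
qed (use conj_class_self[OF c] in blast)

definition product_count :: "'a set \<Rightarrow> 'a \<Rightarrow> nat" where
  "product_count C y = card {p \<in> C \<times> C. fst p \<otimes> snd p = y}"

lemma conj_mult:
  "k \<in> carrier G \<Longrightarrow> a \<in> carrier G \<Longrightarrow> b \<in> carrier G \<Longrightarrow>
    k \<otimes> a \<otimes> inv k \<otimes> (k \<otimes> b \<otimes> inv k) = k \<otimes> (a \<otimes> b) \<otimes> inv k"
  by (simp add: m_assoc inv_mult_cancel_left)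

lemma product_count_conj_le:
  assumes c: "c \<in> carrier G" and k: "k \<in> carrier G" and u: "u \<in> carrier G"
  shows "product_count (conj_class c) u \<le> product_count (conj_class c) (k \<otimes> u \<otimes> inv k)"
  unfolding product_count_def
proof (rule card_inj_on_le)
  let ?C = "conj_class c" and ?\<phi> = "\<lambda>p. (k \<otimes> fst p \<otimes> inv k, k \<otimes> snd p \<otimes> inv k)"
  have C: "a \<in> ?C \<Longrightarrow> a \<in> carrier G" for a using conj_class_subset[OF c] by auto
  show "inj_on ?\<phi> {p \<in> ?C \<times> ?C. fst p \<otimes> snd p = u}"
    using k C by (auto intro!: inj_onI)
  show "?\<phi> ` {p \<in> ?C \<times> ?C. fst p \<otimes> snd p = u} \<subseteq> {p \<in> ?C \<times> ?C. fst p \<otimes> snd p = k \<otimes> u \<otimes> inv k}"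
    using k C conj_class_conj[OF c _ k] by (auto simp: conj_mult)
  show "finite {p \<in> ?C \<times> ?C. fst p \<otimes> snd p = k \<otimes> u \<otimes> inv k}"
    using finite_subset[OF conj_class_subset[OF c] finite_carrier] by simp
qed

lemma product_count_class_function:
  assumes c: "c \<in> carrier G"
  shows "class_function (\<lambda>y. of_nat (product_count (conj_class c) y))"
  unfolding class_function_def
proof (intro ballI)
  fix k u assume k: "k \<in> carrier G" and u: "u \<in> carrier G"
  have "product_count (conj_class c) (k \<otimes> u \<otimes> inv k)
      \<le> product_count (conj_class c) (inv k \<otimes> (k \<otimes> u \<otimes> inv k) \<otimes> inv (inv k))"
    using k u by (intro product_count_conj_le[OF c]) auto
  also have "inv k \<otimes> (k \<otimes> u \<otimes> inv k) \<otimes> inv (inv k) = u"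
    using k u by (simp add: m_assoc inv_mult_cancel_left)
  finally show "of_nat (product_count (conj_class c) (k \<otimes> u \<otimes> inv k)) = of_nat (product_count (conj_class c) u)"
    using product_count_conj_le[OF c k u] by simp
qed

text \<open>Since the class is closed under inversion, \<open>(a, b) \<mapsto> (b\<inverse>, a\<inverse>)\<close> turns \<open>\<chi>((ab)\<inverse>)\<close> into \<open>\<chi>(ab)\<close>.\<close>

lemma product_count_inner_product:
  assumes c: "c \<in> carrier G" and inv_c: "inv c \<in> conj_class c"
  shows "(\<Sum>h\<in>carrier G. of_nat (product_count (conj_class c) h) * \<chi> (inv h))
    = (\<Sum>p\<in>conj_class c \<times> conj_class c. \<chi> (fst p \<otimes> snd p))"
proof -
  let ?C = "conj_class c"
  have C: "a \<in> ?C \<Longrightarrow> a \<in> carrier G" for a using conj_class_subset[OF c] by auto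
  have fin: "finite (?C \<times> ?C)" using finite_subset[OF conj_class_subset[OF c] finite_carrier] by simp
  have "(\<Sum>h\<in>carrier G. of_nat (product_count ?C h) * \<chi> (inv h))
      = (\<Sum>h\<in>carrier G. \<Sum>p\<in>?C \<times> ?C. if fst p \<otimes> snd p = h then \<chi> (inv h) else 0)"
    unfolding product_count_def using fin
    by (intro sum.cong refl) (simp add: sum.inter_filter[symmetric] sum_distrib_right)
  also have "\<dots> = (\<Sum>p\<in>?C \<times> ?C. \<Sum>h\<in>carrier G. if h = fst p \<otimes> snd p then \<chi> (inv h) else 0)"
    by (subst sum.swap) (intro sum.cong refl, auto)
  also have "\<dots> = (\<Sum>p\<in>?C \<times> ?C. \<chi> (inv (snd p) \<otimes> inv (fst p)))"
    using C by (intro sum.cong refl) (auto simp: sum.delta[OF finite_carrier] inv_mult_group)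
  also have "\<dots> = (\<Sum>p\<in>?C \<times> ?C. \<chi> (fst p \<otimes> snd p))"
    by (rule sum.reindex_bij_witness[where i = "\<lambda>p. (inv (snd p), inv (fst p))"
          and j = "\<lambda>p. (inv (snd p), inv (fst p))"]) (use C conj_class_inv[OF c inv_c] in auto)
  finally show ?thesis .
qed

text \<open>The class sum is central in the group algebra, so Schur's lemma makes it a scalar in
  every irreducible representation; the scalar is read off from the trace.\<close>

lemma mat_sum_conj_class_scalar:
  assumes \<rho>: "irreducible_rep G n \<rho>" and c: "c \<in> carrier G"
  shows "mat_sum \<rho> (conj_class c) n n = (of_nat (card (conj_class c)) * mat_trace (\<rho> c) / of_nat n) \<cdot>\<^sub>m 1\<^sub>m n"
proof -
  let ?C = "conj_class c" and ?K = "mat_sum \<rho> (conj_class c) n n"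
  note rep = irreducible_repD(1)[OF \<rho>]
  have C: "a \<in> ?C \<Longrightarrow> a \<in> carrier G" for a using conj_class_subset[OF c] by auto
  have \<rho>C: "a \<in> ?C \<Longrightarrow> \<rho> a \<in> carrier_mat n n" for a using representation_carrier[OF rep] C by blast
  have "\<rho> k * ?K = ?K * \<rho> k" if k: "k \<in> carrier G" for k
  proof -
    have \<rho>k: "\<rho> k \<in> carrier_mat n n" using representation_carrier[OF rep k] .
    have "\<rho> k * ?K = mat_sum (\<lambda>a. \<rho> k * \<rho> a) ?C n n" by (rule mult_mat_sum[OF \<rho>k \<rho>C])
    also have "\<dots> = mat_sum (\<lambda>a. \<rho> ((k \<otimes> a \<otimes> inv k) \<otimes> k)) ?C n n"
      using k C by (intro mat_sum_cong) (simp add: representation_mult[OF rep] m_assoc)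
    also have "\<dots> = mat_sum (\<lambda>a. \<rho> (a \<otimes> k)) ?C n n"
      by (rule mat_sum_reindex_bij_betw[OF conj_class_conj_bij_betw[OF c k]])
    also have "\<dots> = mat_sum (\<lambda>a. \<rho> a * \<rho> k) ?C n n"
      using k C by (intro mat_sum_cong) (simp add: representation_mult[OF rep])
    also have "\<dots> = ?K * \<rho> k" by (rule mat_sum_mult[OF \<rho>k \<rho>C, symmetric])
    finally show ?thesis .
  qed
  then obtain \<mu> where \<mu>: "?K = \<mu> \<cdot>\<^sub>m 1\<^sub>m n" using schur_scalar[OF \<rho> mat_sum_carrier] by blast
  have "\<mu> * of_nat n = mat_trace ?K" using \<mu> mat_trace_smult[of "1\<^sub>m n" n \<mu>] by simp
  also have "\<dots> = (\<Sum>a\<in>?C. mat_trace (\<rho> a))" by (rule mat_trace_mat_sum[OF \<rho>C])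
  also have "\<dots> = (\<Sum>a\<in>?C. mat_trace (\<rho> c))"
    using mat_trace_representation_conj[OF rep _ c] by (intro sum.cong) (auto simp: conj_class_def)
  finally have "\<mu> = of_nat (card ?C) * mat_trace (\<rho> c) / of_nat n"
    using irreducible_repD(2)[OF \<rho>] by (simp add: field_simps)
  with \<mu> show ?thesis by simp
qed

lemma irr_char_conj_class_pair_sum:
  assumes \<chi>: "\<chi> \<in> irr_chars G" and c: "c \<in> carrier G"
  shows "(\<Sum>p\<in>conj_class c \<times> conj_class c. \<chi> (fst p \<otimes> snd p)) * \<chi> \<one> = (of_nat (card (conj_class c)) * \<chi> c)\<^sup>2"
  using \<chi>
proof (rule irr_charsE)
  fix n \<rho> assume \<rho>: "irreducible_rep G n \<rho>" and \<chi>\<rho>: "\<chi> = (\<lambda>x\<in>carrier G. mat_trace (\<rho> x))"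
  let ?C = "conj_class c" and ?K = "mat_sum \<rho> (conj_class c) n n"
  define \<mu> where "\<mu> = of_nat (card ?C) * mat_trace (\<rho> c) / of_nat n"
  note rep = irreducible_repD(1)[OF \<rho>]
  have C: "a \<in> ?C \<Longrightarrow> a \<in> carrier G" for a using conj_class_subset[OF c] by auto
  have \<rho>C: "a \<in> ?C \<Longrightarrow> \<rho> a \<in> carrier_mat n n" for a using representation_carrier[OF rep] C by blast
  have K: "?K = \<mu> \<cdot>\<^sub>m 1\<^sub>m n" unfolding \<mu>_def by (rule mat_sum_conj_class_scalar[OF \<rho> c])
  have "(\<Sum>p\<in>?C \<times> ?C. \<chi> (fst p \<otimes> snd p)) = (\<Sum>p\<in>?C \<times> ?C. mat_trace (\<rho> (fst p) * \<rho> (snd p)))"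
    using C \<chi>\<rho> by (intro sum.cong) (auto simp: representation_mult[OF rep])
  also have "\<dots> = (\<Sum>a\<in>?C. \<Sum>b\<in>?C. mat_trace (\<rho> a * \<rho> b))" by (simp add: sum.cartesian_product')
  also have "\<dots> = (\<Sum>a\<in>?C. mat_trace (\<rho> a * ?K))"
  proof (rule sum.cong[OF refl])
    fix a assume a: "a \<in> ?C"
    have "mat_trace (\<rho> a * ?K) = mat_trace (mat_sum (\<lambda>b. \<rho> a * \<rho> b) ?C n n)"
      by (simp only: mult_mat_sum[OF \<rho>C[OF a] \<rho>C])
    also have "\<dots> = (\<Sum>b\<in>?C. mat_trace (\<rho> a * \<rho> b))"
      by (rule mat_trace_mat_sum) (rule mult_carrier_mat[OF \<rho>C[OF a] \<rho>C])
    finally show "(\<Sum>b\<in>?C. mat_trace (\<rho> a * \<rho> b)) = mat_trace (\<rho> a * ?K)" by simp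
  qed
  also have "\<dots> = mat_trace (?K * ?K)"
  proof -
    have "mat_trace (?K * ?K) = mat_trace (mat_sum (\<lambda>a. \<rho> a * ?K) ?C n n)"
      by (simp only: mat_sum_mult[OF mat_sum_carrier \<rho>C])
    also have "\<dots> = (\<Sum>a\<in>?C. mat_trace (\<rho> a * ?K))"
      by (rule mat_trace_mat_sum) (rule mult_carrier_mat[OF \<rho>C mat_sum_carrier])
    finally show ?thesis by simp
  qed
  also have "?K * ?K = \<mu> \<cdot>\<^sub>m (\<mu> \<cdot>\<^sub>m 1\<^sub>m n)"
    unfolding K using mult_smult_assoc_mat[of "1\<^sub>m n" n n "\<mu> \<cdot>\<^sub>m 1\<^sub>m n" n \<mu>] by simp
  also have "mat_trace \<dots> = \<mu> * \<mu> * of_nat n"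
    using mat_trace_smult[of "\<mu> \<cdot>\<^sub>m 1\<^sub>m n" n \<mu>] mat_trace_smult[of "1\<^sub>m n" n \<mu>] by simp
  finally have "(\<Sum>p\<in>?C \<times> ?C. \<chi> (fst p \<otimes> snd p)) = \<mu> * \<mu> * of_nat n" .
  moreover have "\<chi> \<one> = of_nat n" using \<chi>\<rho> representation_one[OF rep] by simp
  moreover have "\<chi> c = mat_trace (\<rho> c)" using \<chi>\<rho> c by simp
  ultimately show ?thesis
    using irreducible_repD(2)[OF \<rho>] unfolding \<mu>_def by (simp add: power2_eq_square field_simps)
qed

theorem product_count_conj_class:
  assumes c: "c \<in> carrier G" and inv_c: "inv c \<in> conj_class c"
  shows "of_nat (product_count (conj_class c) c) * of_nat (card (carrier G))
    = (of_nat (card (conj_class c)))\<^sup>2 * (\<Sum>\<chi>\<in>irr_chars G. \<chi> c ^ 3 / \<chi> \<one>)"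
proof -
  let ?C = "conj_class c" and ?F = "\<lambda>y. of_nat (product_count (conj_class c) y) :: complex"
  have "?F c = (\<Sum>\<chi>\<in>irr_chars G. (\<Sum>h\<in>carrier G. ?F h * \<chi> (inv h)) * \<chi> c) / of_nat (card (carrier G))"
    by (rule class_function_expansion[OF product_count_class_function[OF c] c])
  also have "(\<Sum>\<chi>\<in>irr_chars G. (\<Sum>h\<in>carrier G. ?F h * \<chi> (inv h)) * \<chi> c)
      = (\<Sum>\<chi>\<in>irr_chars G. (of_nat (card ?C))\<^sup>2 * (\<chi> c ^ 3 / \<chi> \<one>))"
  proof (rule sum.cong[OF refl])
    fix \<chi> assume \<chi>: "\<chi> \<in> irr_chars G"
    obtain n where "0 < n" "\<chi> \<one> = of_nat n" by (rule irr_chars_one[OF \<chi>])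
    then have "\<chi> \<one> \<noteq> 0" by simp
    have "(\<Sum>h\<in>carrier G. ?F h * \<chi> (inv h)) = (of_nat (card ?C) * \<chi> c)\<^sup>2 / \<chi> \<one>"
      using product_count_inner_product[OF c inv_c, of \<chi>] irr_char_conj_class_pair_sum[OF \<chi> c] \<open>\<chi> \<one> \<noteq> 0\<close>
      by (simp add: eq_divide_eq)
    then show "(\<Sum>h\<in>carrier G. ?F h * \<chi> (inv h)) * \<chi> c = (of_nat (card ?C))\<^sup>2 * (\<chi> c ^ 3 / \<chi> \<one>)"
      by (simp add: power2_eq_square power3_eq_cube)
  qed
  also have "\<dots> = (of_nat (card ?C))\<^sup>2 * (\<Sum>\<chi>\<in>irr_chars G. \<chi> c ^ 3 / \<chi> \<one>)"
    by (rule sum_distrib_left[symmetric])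
  finally show ?thesis using card_carrier_pos by (simp add: divide_eq_eq)
qed

corollary irr_chars_cube_sum_eq_zero_iff:
  assumes c: "c \<in> carrier G" and inv_c: "inv c \<in> conj_class c"
  shows "(\<Sum>\<chi>\<in>irr_chars G. \<chi> c ^ 3 / \<chi> \<one>) = 0 \<longleftrightarrow> \<not> (\<exists>a\<in>conj_class c. \<exists>b\<in>conj_class c. a \<otimes> b = c)"
proof -
  have fin: "finite (conj_class c)" using finite_subset[OF conj_class_subset[OF c] finite_carrier] .
  then have "(of_nat (card (conj_class c)))\<^sup>2 \<noteq> (0 :: complex)" using conj_class_self[OF c] by auto
  then have "(\<Sum>\<chi>\<in>irr_chars G. \<chi> c ^ 3 / \<chi> \<one>) = 0
      \<longleftrightarrow> of_nat (product_count (conj_class c) c) * of_nat (card (carrier G)) = (0 :: complex)"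
    unfolding product_count_conj_class[OF c inv_c] by simp
  also have "\<dots> \<longleftrightarrow> product_count (conj_class c) c = 0" using card_carrier_pos by simp
  also have "\<dots> \<longleftrightarrow> \<not> (\<exists>a\<in>conj_class c. \<exists>b\<in>conj_class c. a \<otimes> b = c)"
    using fin unfolding product_count_def by auto
  finally show ?thesis .
qed

end

section \<open>Permutation groups\<close>

lemma intersecting_card_le_2_iff_no_triple:
  "(\<forall>F\<subseteq>G. intersecting V F \<longrightarrow> card F \<le> 2) \<longleftrightarrow> \<not> (\<exists>F\<subseteq>G. intersecting V F \<and> card F = 3)"
proof
  assume bound: "\<forall>F\<subseteq>G. intersecting V F \<longrightarrow> card F \<le> 2"
  show "\<not> (\<exists>F\<subseteq>G. intersecting V F \<and> card F = 3)"
  proof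
    assume "\<exists>F\<subseteq>G. intersecting V F \<and> card F = 3"
    then obtain F where "F \<subseteq> G" "intersecting V F" "card F = 3" by blast
    moreover from calculation(1,2) bound have "card F \<le> 2" by blast
    ultimately show False by simp
  qed
next
  assume no_triple: "\<not> (\<exists>F\<subseteq>G. intersecting V F \<and> card F = 3)"
  show "\<forall>F\<subseteq>G. intersecting V F \<longrightarrow> card F \<le> 2"
  proof (intro allI impI)
    fix F assume F: "F \<subseteq> G" "intersecting V F"
    show "card F \<le> 2"
    proof (rule ccontr)
      assume "\<not> card F \<le> 2"
      then obtain F' where F': "F' \<subseteq> F" "card F' = 3"
        using obtain_subset_with_card_n[of 3 F] by auto
      then have "intersecting V F'" using F unfolding intersecting_def by blast
      then show False using no_triple F F' by blast
    qed
  qed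
qed

locale permutation_group =
  fixes V :: "'a set" and G :: "('a \<Rightarrow> 'a) set"
  assumes perm_group: "perm_group V G"
begin

abbreviation grp :: "('a \<Rightarrow> 'a) monoid" where
  "grp \<equiv> (BijGroup V)\<lparr>carrier := G\<rparr>"

lemma subset_Bij: "G \<subseteq> Bij V"
  using subgroup.subset perm_group unfolding perm_group_def by (fastforce simp: BijGroup_def)

sublocale grp: finite_group grp
proof -
  have sub: "subgroup G (BijGroup V)" using perm_group unfolding perm_group_def by simp
  have "G \<subseteq> V \<rightarrow>\<^sub>E V" using subset_Bij unfolding Bij_def by (auto simp: bij_betw_def PiE_def Pi_def)
  moreover have "finite (V \<rightarrow>\<^sub>E V)" using perm_group unfolding perm_group_def by (simp add: finite_PiE)
  ultimately have "finite G" by (rule finite_subset)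
  then show "finite_group grp"
    by (intro finite_group.intro group.subgroup_imp_group[OF group_BijGroup sub]) (unfold_locales, simp)
qed

lemma apply_closed: "x \<in> G \<Longrightarrow> w \<in> V \<Longrightarrow> x w \<in> V"
  using subset_Bij Bij_imp_funcset by blast

lemma mult_apply: "x \<in> G \<Longrightarrow> y \<in> G \<Longrightarrow> w \<in> V \<Longrightarrow> (x \<otimes>\<^bsub>grp\<^esub> y) w = x (y w)"
  using subset_Bij by (auto simp: BijGroup_def compose_def)

lemma one_apply: "w \<in> V \<Longrightarrow> \<one>\<^bsub>grp\<^esub> w = w"
  by (simp add: BijGroup_def)

lemma inv_apply:
  assumes x: "x \<in> G" and w: "w \<in> V"
  shows "(inv\<^bsub>grp\<^esub> x) (x w) = w"
proof -
  have "(inv\<^bsub>grp\<^esub> x) (x w) = (inv\<^bsub>grp\<^esub> x \<otimes>\<^bsub>grp\<^esub> x) w"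
    using mult_apply[of "inv\<^bsub>grp\<^esub> x" x w] grp.inv_closed x w by simp
  also have "inv\<^bsub>grp\<^esub> x \<otimes>\<^bsub>grp\<^esub> x = \<one>\<^bsub>grp\<^esub>" using grp.l_inv x by simp
  finally show ?thesis using one_apply w by simp
qed

definition nontrivial_fixers :: "('a \<Rightarrow> 'a) set" where
  "nontrivial_fixers = {a \<in> G. a \<noteq> \<one>\<^bsub>grp\<^esub> \<and> (\<exists>w\<in>V. a w = w)}"

lemma nontrivial_fixers_inv:
  assumes "a \<in> nontrivial_fixers"
  shows "inv\<^bsub>grp\<^esub> a \<in> nontrivial_fixers"
proof -
  obtain w where a: "a \<in> G" "a \<noteq> \<one>\<^bsub>grp\<^esub>" and w: "w \<in> V" "a w = w"
    using assms unfolding nontrivial_fixers_def by blast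
  have "inv\<^bsub>grp\<^esub> a \<noteq> \<one>\<^bsub>grp\<^esub>" using a grp.inv_eq_1_iff by simp
  moreover have "(inv\<^bsub>grp\<^esub> a) w = w" using inv_apply[OF a(1) w(1)] w(2) by simp
  ultimately show ?thesis using a(1) w(1) grp.inv_closed unfolding nontrivial_fixers_def by auto
qed

lemma agree_iff_nontrivial_fixer:
  assumes x: "x \<in> G" and y: "y \<in> G" and "x \<noteq> y"
  shows "(\<exists>w\<in>V. x w = y w) \<longleftrightarrow> inv\<^bsub>grp\<^esub> x \<otimes>\<^bsub>grp\<^esub> y \<in> nontrivial_fixers"
proof -
  have x': "inv\<^bsub>grp\<^esub> x \<in> G" using grp.inv_closed x by simp
  have "inv\<^bsub>grp\<^esub> x \<otimes>\<^bsub>grp\<^esub> y \<noteq> \<one>\<^bsub>grp\<^esub>"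
  proof
    assume "inv\<^bsub>grp\<^esub> x \<otimes>\<^bsub>grp\<^esub> y = \<one>\<^bsub>grp\<^esub>"
    then have "y = x \<otimes>\<^bsub>grp\<^esub> \<one>\<^bsub>grp\<^esub>" using grp.inv_solve_left[of "\<one>\<^bsub>grp\<^esub>" x y] grp.one_closed x y by simp
    then show False using grp.r_one[of x] x \<open>x \<noteq> y\<close> by simp
  qed
  moreover have "(inv\<^bsub>grp\<^esub> x \<otimes>\<^bsub>grp\<^esub> y) w = w \<longleftrightarrow> x w = y w" if w: "w \<in> V" for w
  proof -
    have "(inv\<^bsub>grp\<^esub> x \<otimes>\<^bsub>grp\<^esub> y) w = (inv\<^bsub>grp\<^esub> x) (y w)" using mult_apply[OF x' y w] .
    moreover have "x ((inv\<^bsub>grp\<^esub> x) (y w)) = y w"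
      using mult_apply[OF x x' apply_closed[OF y w]] grp.r_inv x one_apply[OF apply_closed[OF y w]] by simp
    ultimately show ?thesis using inv_apply[OF x w] by metis
  qed
  ultimately show ?thesis
    using grp.m_closed x' y unfolding nontrivial_fixers_def by auto
qed

lemma nontrivial_fixers_swap:
  assumes "x \<in> G" "y \<in> G" "inv\<^bsub>grp\<^esub> x \<otimes>\<^bsub>grp\<^esub> y \<in> nontrivial_fixers"
  shows "inv\<^bsub>grp\<^esub> y \<otimes>\<^bsub>grp\<^esub> x \<in> nontrivial_fixers"
proof -
  have "inv\<^bsub>grp\<^esub> (inv\<^bsub>grp\<^esub> x \<otimes>\<^bsub>grp\<^esub> y) = inv\<^bsub>grp\<^esub> y \<otimes>\<^bsub>grp\<^esub> x"
    using assms(1,2) grp.inv_mult_group[of "inv\<^bsub>grp\<^esub> x" y] grp.inv_closed[of x] grp.inv_inv[of x] by simp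
  then show ?thesis using nontrivial_fixers_inv[OF assms(3)] by simp
qed

lemma intersecting_iff_nontrivial_fixers:
  assumes F: "F \<subseteq> G" and V: "V \<noteq> {}"
  shows "intersecting V F \<longleftrightarrow>
    (\<forall>x\<in>F. \<forall>y\<in>F. x \<noteq> y \<longrightarrow> inv\<^bsub>grp\<^esub> x \<otimes>\<^bsub>grp\<^esub> y \<in> nontrivial_fixers)"
proof -
  have "(\<exists>w\<in>V. x w = y w) \<longleftrightarrow> x = y \<or> inv\<^bsub>grp\<^esub> x \<otimes>\<^bsub>grp\<^esub> y \<in> nontrivial_fixers"
    if "x \<in> F" "y \<in> F" for x y
    using agree_iff_nontrivial_fixer[of x y] F V that by (cases "x = y") auto
  then show ?thesis unfolding intersecting_def by blast
qed

text \<open>Translating an intersecting triple \<open>{x, y, z}\<close> by \<open>x\<inverse>\<close> gives \<open>{1, x\<inverse>y, x\<inverse>z}\<close>, with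
  \<open>x\<inverse>z = (x\<inverse>y)(y\<inverse>z)\<close>; conversely \<open>{1, a, ab}\<close> is intersecting.\<close>

lemma intersecting_triple_iff:
  assumes V: "V \<noteq> {}"
  shows "(\<exists>F\<subseteq>G. intersecting V F \<and> card F = 3) \<longleftrightarrow>
    (\<exists>a\<in>nontrivial_fixers. \<exists>b\<in>nontrivial_fixers. a \<otimes>\<^bsub>grp\<^esub> b \<in> nontrivial_fixers)"
    (is "_ \<longleftrightarrow> (\<exists>a\<in>?I. \<exists>b\<in>?I. _)")
proof
  assume "\<exists>F\<subseteq>G. intersecting V F \<and> card F = 3"
  then obtain x y z where F: "{x, y, z} \<subseteq> G" "intersecting V {x, y, z}" and "x \<noteq> y" "y \<noteq> z" "x \<noteq> z"
    by (metis card_3_iff)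
  then have "inv\<^bsub>grp\<^esub> x \<otimes>\<^bsub>grp\<^esub> y \<in> ?I" "inv\<^bsub>grp\<^esub> y \<otimes>\<^bsub>grp\<^esub> z \<in> ?I"
    "inv\<^bsub>grp\<^esub> x \<otimes>\<^bsub>grp\<^esub> z \<in> ?I"
    using intersecting_iff_nontrivial_fixers[OF F(1) V] by auto
  moreover have "(inv\<^bsub>grp\<^esub> x \<otimes>\<^bsub>grp\<^esub> y) \<otimes>\<^bsub>grp\<^esub> (inv\<^bsub>grp\<^esub> y \<otimes>\<^bsub>grp\<^esub> z) = inv\<^bsub>grp\<^esub> x \<otimes>\<^bsub>grp\<^esub> z"
    using F(1) grp.m_assoc[of "inv\<^bsub>grp\<^esub> x" y "inv\<^bsub>grp\<^esub> y \<otimes>\<^bsub>grp\<^esub> z"]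
      grp.mult_inv_cancel_left[of y z] grp.inv_closed grp.m_closed by simp
  ultimately show "\<exists>a\<in>?I. \<exists>b\<in>?I. a \<otimes>\<^bsub>grp\<^esub> b \<in> ?I" by metis
next
  assume "\<exists>a\<in>?I. \<exists>b\<in>?I. a \<otimes>\<^bsub>grp\<^esub> b \<in> ?I"
  then obtain a b where ab: "a \<in> ?I" "b \<in> ?I" "a \<otimes>\<^bsub>grp\<^esub> b \<in> ?I" by blast
  let ?F = "{\<one>\<^bsub>grp\<^esub>, a, a \<otimes>\<^bsub>grp\<^esub> b}"
  have G: "a \<in> G" "b \<in> G" and nontrivial: "a \<noteq> \<one>\<^bsub>grp\<^esub>" "b \<noteq> \<one>\<^bsub>grp\<^esub>" "a \<otimes>\<^bsub>grp\<^esub> b \<noteq> \<one>\<^bsub>grp\<^esub>"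
    using ab unfolding nontrivial_fixers_def by auto
  have "a \<otimes>\<^bsub>grp\<^esub> b \<noteq> a" using grp.l_cancel_one[of a b] G nontrivial(2) by simp
  then have "card ?F = 3" using nontrivial by simp
  moreover have F: "?F \<subseteq> G" using G grp.one_closed grp.m_closed by simp
  moreover have "inv\<^bsub>grp\<^esub> x \<otimes>\<^bsub>grp\<^esub> y \<in> ?I"
    if "(x, y) \<in> {(\<one>\<^bsub>grp\<^esub>, a), (\<one>\<^bsub>grp\<^esub>, a \<otimes>\<^bsub>grp\<^esub> b), (a, a \<otimes>\<^bsub>grp\<^esub> b)}" for x y
    using that ab G grp.inv_mult_cancel_left[of a b] grp.inv_one grp.l_one[of a] grp.l_one[of "a \<otimes>\<^bsub>grp\<^esub> b"]
      grp.m_closed[of a b] by auto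
  then have "intersecting V ?F"
    using intersecting_iff_nontrivial_fixers[OF F V] nontrivial_fixers_swap F by auto
  ultimately show "\<exists>F\<subseteq>G. intersecting V F \<and> card F = 3" by blast
qed

lemma EKR_iff_intersecting_card_le_2:
  assumes V: "V \<noteq> {}" and stabilizer_card: "\<forall>w\<in>V. card (stabilizer V G w) = 2"
  shows "EKR V G \<longleftrightarrow> (\<forall>F\<subseteq>G. intersecting V F \<longrightarrow> card F \<le> 2)"
proof -
  let ?M = "{card F | F. F \<subseteq> G \<and> intersecting V F}"
  have "?M \<subseteq> card ` Pow G" by auto
  then have fin_M: "finite ?M" using grp.finite_carrier finite_subset by fastforce
  obtain v where v: "v \<in> V" using V by blast
  have "stabilizer V G v \<subseteq> G \<and> intersecting V (stabilizer V G v)"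
    unfolding stabilizer_def intersecting_def using v by (auto intro!: bexI[of _ v])
  then have "2 \<in> ?M"
    using stabilizer_card v by (intro CollectI exI[of _ "stabilizer V G v"]) simp
  have "(\<lambda>v. card (stabilizer V G v)) ` V = {2}" using stabilizer_card V by auto
  then have "EKR V G \<longleftrightarrow> Max ?M = 2" unfolding EKR_def by simp
  also have "\<dots> \<longleftrightarrow> (\<forall>F\<subseteq>G. intersecting V F \<longrightarrow> card F \<le> 2)"
  proof
    assume max: "Max ?M = 2"
    show "\<forall>F\<subseteq>G. intersecting V F \<longrightarrow> card F \<le> 2"
    proof (intro allI impI)
      fix F assume "F \<subseteq> G" "intersecting V F"
      then have "card F \<in> ?M" by blast
      then show "card F \<le> 2" using Max_ge[OF fin_M] max by simp
    qed
  next
    assume bound: "\<forall>F\<subseteq>G. intersecting V F \<longrightarrow> card F \<le> 2"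
    show "Max ?M = 2"
    proof (rule Max_eqI[OF fin_M _ \<open>2 \<in> ?M\<close>])
      fix m assume "m \<in> ?M"
      then obtain F where "m = card F" "F \<subseteq> G" "intersecting V F" by blast
      then show "m \<le> 2" using bound by simp
    qed
  qed
  finally show ?thesis .
qed

lemma conj_fixes:
  assumes k: "k \<in> G" and a: "a \<in> G" and w: "w \<in> V" "a w = w"
  shows "(k \<otimes>\<^bsub>grp\<^esub> a \<otimes>\<^bsub>grp\<^esub> inv\<^bsub>grp\<^esub> k) (k w) = k w"
  using mult_apply[of "k \<otimes>\<^bsub>grp\<^esub> a" "inv\<^bsub>grp\<^esub> k" "k w"] mult_apply[of k a w] inv_apply[OF k w(1)]
    grp.m_closed[of k a] grp.inv_closed[of k] apply_closed[OF k w(1)] k a w by simp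

text \<open>With stabilisers of order two, a point determines its unique nontrivial fixer; transitivity
  then makes all nontrivial fixers conjugate.\<close>

lemma nontrivial_fixers_eq_conj_class:
  assumes transitive: "transitive_on V G" and stabilizer_card: "\<forall>w\<in>V. card (stabilizer V G w) = 2"
    and g: "g \<in> nontrivial_fixers"
  shows "nontrivial_fixers = grp.conj_class g"
proof
  obtain v where gG: "g \<in> G" and g1: "g \<noteq> \<one>\<^bsub>grp\<^esub>" and v: "v \<in> V" "g v = v"
    using g unfolding nontrivial_fixers_def by blast
  have conj_ne_one: "k \<otimes>\<^bsub>grp\<^esub> g \<otimes>\<^bsub>grp\<^esub> inv\<^bsub>grp\<^esub> k \<noteq> \<one>\<^bsub>grp\<^esub>" if k: "k \<in> G" for k
    using grp.inv_solve_right[of "\<one>\<^bsub>grp\<^esub>" "k \<otimes>\<^bsub>grp\<^esub> g" k] grp.l_cancel_one[of k g] grp.one_closed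
      grp.m_closed[of k g] grp.l_one[of k] k gG g1 by auto
  show "grp.conj_class g \<subseteq> nontrivial_fixers"
    using conj_fixes[OF _ gG v] conj_ne_one apply_closed[OF _ v(1)] grp.m_closed grp.inv_closed gG
    unfolding grp.conj_class_def nontrivial_fixers_def by auto
  show "nontrivial_fixers \<subseteq> grp.conj_class g"
  proof
    fix a assume "a \<in> nontrivial_fixers"
    then obtain w where a: "a \<in> G" "a \<noteq> \<one>\<^bsub>grp\<^esub>" and w: "w \<in> V" "a w = w"
      unfolding nontrivial_fixers_def by blast
    obtain k where k: "k \<in> G" "k v = w" using transitive v(1) w(1) unfolding transitive_on_def by blast
    let ?b = "k \<otimes>\<^bsub>grp\<^esub> g \<otimes>\<^bsub>grp\<^esub> inv\<^bsub>grp\<^esub> k"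
    have b: "?b \<in> G" "?b \<noteq> \<one>\<^bsub>grp\<^esub>" "?b w = w"
      using conj_fixes[OF k(1) gG v] k conj_ne_one grp.m_closed grp.inv_closed gG by auto
    have "{\<one>\<^bsub>grp\<^esub>, a, ?b} \<subseteq> stabilizer V G w"
      using a b w grp.one_closed one_apply unfolding stabilizer_def by auto
    moreover have "finite (stabilizer V G w)" using grp.finite_carrier unfolding stabilizer_def by simp
    ultimately have "card {\<one>\<^bsub>grp\<^esub>, a, ?b} \<le> 2" using card_mono stabilizer_card w(1) by metis
    then have "a = ?b" using a(2) b(2) by (cases "a = ?b") auto
    then show "a \<in> grp.conj_class g" using k(1) unfolding grp.conj_class_def by auto
  qed
qed

end

theorem proposition3p4:
  fixes V :: "'a set" and G :: "('a \<Rightarrow> 'a) set" and g :: "'a \<Rightarrow> 'a" and v :: 'a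
  defines "H \<equiv> (BijGroup V)\<lparr>carrier := G\<rparr>"
  assumes "perm_group V G"
    and "V \<noteq> {}"
    and "transitive_on V G"
    and "\<forall>w\<in>V. card (stabilizer V G w) = 2"
    and "g \<in> G" and "g \<noteq> \<one>\<^bsub>H\<^esub>" and "v \<in> V" and "g v = v"
  shows "EKR V G \<longleftrightarrow> (\<Sum>\<chi>\<in>irr_chars H. \<chi> g ^ 3 / \<chi> \<one>\<^bsub>H\<^esub>) = 0"
proof -
  interpret permutation_group V G by unfold_locales (fact assms(2))
  have H: "H = grp" by (simp add: H_def)
  have g: "g \<in> nontrivial_fixers" using assms(6-9) unfolding nontrivial_fixers_def H by blast
  have fixers_eq: "nontrivial_fixers = grp.conj_class g"
    by (rule nontrivial_fixers_eq_conj_class[OF assms(4,5) g])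
  have g_carrier: "g \<in> carrier grp" using assms(6) by simp
  have inv_g: "inv\<^bsub>grp\<^esub> g \<in> grp.conj_class g" using nontrivial_fixers_inv[OF g] fixers_eq by simp
  have "EKR V G \<longleftrightarrow> \<not> (\<exists>F\<subseteq>G. intersecting V F \<and> card F = 3)"
    using EKR_iff_intersecting_card_le_2[OF assms(3,5)] intersecting_card_le_2_iff_no_triple by simp
  also have "\<dots> \<longleftrightarrow> \<not> (\<exists>a\<in>grp.conj_class g. \<exists>b\<in>grp.conj_class g. a \<otimes>\<^bsub>grp\<^esub> b \<in> grp.conj_class g)"
    using intersecting_triple_iff[OF assms(3)] fixers_eq by simp
  also have "\<dots> \<longleftrightarrow> \<not> (\<exists>a\<in>grp.conj_class g. \<exists>b\<in>grp.conj_class g. a \<otimes>\<^bsub>grp\<^esub> b = g)"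
    using grp.conj_class_product_mem_iff[OF g_carrier] by simp
  also have "\<dots> \<longleftrightarrow> (\<Sum>\<chi>\<in>irr_chars grp. \<chi> g ^ 3 / \<chi> \<one>\<^bsub>grp\<^esub>) = 0"
    using grp.irr_chars_cube_sum_eq_zero_iff[OF g_carrier inv_g] by simp
  finally show ?thesis unfolding H .
qed

end
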